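(* Let $A_0$ be a Dedekind domain, $Y=\operatorname{Spec}A_0$, and let $D_1,\dots,D_r$ be $\mathbb{Q}$-divisors on $Y$. Then the $A_0$-algebra $$B=\bigoplus_{(m_1,\dots,m_r)\in\mathbb{N}^r}H^0\Big(Y,\mathcal{O}_Y\Big(\Big\lfloor\sum_{i=1}^r m_iD_i\Big\rfloor\Big)\Big)$$ (with multiplication induced by multiplication in the fraction field of $A_0$) is finitely generated.
   Context: For a $\mathbb{Q}$-divisor $D$ on $Y$, $H^0(Y,\mathcal{O}_Y(\lfloor D\rfloor))=\{g\in K_0^\star:\operatorname{div}g+\lfloor D\rfloor\ge0\}\cup\{0\}$, where $K_0=\operatorname{Frac}A_0$ and $\lfloor\cdot\rfloor$ takes integer parts of coefficients. *)

theory Defs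
  imports "HOL-Computational_Algebra.Polynomial_Factorial" "HOL-Library.Poly_Mapping"
begin

definition ring_ideal :: "'a::comm_ring_1 set \<Rightarrow> bool" where
  "ring_ideal I \<longleftrightarrow> 0 \<in> I \<and> (\<forall>x\<in>I. \<forall>y\<in>I. x + y \<in> I) \<and> (\<forall>r. \<forall>x\<in>I. r * x \<in> I)"

definition ideal_span :: "'a::comm_ring_1 set \<Rightarrow> 'a set" where
  "ideal_span S = {x. \<exists>k (c::nat \<Rightarrow> 'a) s. (\<forall>i<k. s i \<in> S) \<and> x = (\<Sum>i<k. c i * s i)}"

definition prime_ideal :: "'a::comm_ring_1 set \<Rightarrow> bool" where
  "prime_ideal P \<longleftrightarrow> ring_ideal P \<and> P \<noteq> UNIV \<and> (\<forall>a b. a * b \<in> P \<longrightarrow> a \<in> P \<or> b \<in> P)"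

definition maximal_ideal :: "'a::comm_ring_1 set \<Rightarrow> bool" where
  "maximal_ideal M \<longleftrightarrow> ring_ideal M \<and> M \<noteq> UNIV \<and>
     (\<forall>J. ring_ideal J \<and> M \<subseteq> J \<longrightarrow> J = M \<or> J = UNIV)"

definition noetherian_ring :: "'a::comm_ring_1 itself \<Rightarrow> bool" where
  "noetherian_ring _ \<longleftrightarrow> (\<forall>I::'a set. ring_ideal I \<longrightarrow> (\<exists>S. finite S \<and> I = ideal_span S))"

text \<open>Krull dimension at most one (for a domain): every nonzero prime ideal is maximal.\<close>
definition dim_le_one :: "'a::comm_ring_1 itself \<Rightarrow> bool" where
  "dim_le_one _ \<longleftrightarrow> (\<forall>P::'a set. prime_ideal P \<and> P \<noteq> {0} \<longrightarrow> maximal_ideal P)"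

definition integrally_closed :: "'a::idom itself \<Rightarrow> bool" where
  "integrally_closed _ \<longleftrightarrow>
     (\<forall>x::'a fract. (\<exists>p::'a poly. lead_coeff p = 1 \<and> poly (map_poly to_fract p) x = 0)
        \<longrightarrow> x \<in> range to_fract)"

definition dedekind_domain :: "'a::idom itself \<Rightarrow> bool" where
  "dedekind_domain T \<longleftrightarrow> noetherian_ring T \<and> dim_le_one T \<and> integrally_closed T"

text \<open>Prime divisors of Spec A_0: the height-one primes, i.e. (dimension \<le> 1) the nonzero primes.\<close>
definition prime_divisor :: "'a::idom set \<Rightarrow> bool" where
  "prime_divisor P \<longleftrightarrow> prime_ideal P \<and> P \<noteq> {0}"

definition Q_divisor :: "('a::idom set \<Rightarrow> rat) \<Rightarrow> bool" where
  "Q_divisor D \<longleftrightarrow> finite {P. D P \<noteq> 0} \<and> (\<forall>P. D P \<noteq> 0 \<longrightarrow> prime_divisor P)"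

definition ideal_pow :: "'a::comm_ring_1 set \<Rightarrow> nat \<Rightarrow> 'a set" where
  "ideal_pow P n = ideal_span {(\<Prod>i<n. x i) | x. \<forall>i<n. x i \<in> P}"

text \<open>Valuation of a nonzero element a of A_0 at P (order in the local ring at P).\<close>
definition val_at :: "'a::idom set \<Rightarrow> 'a \<Rightarrow> nat" where
  "val_at P a = (GREATEST n. \<exists>s. s \<notin> P \<and> s * a \<in> ideal_pow P n)"

definition ord_at :: "'a::idom set \<Rightarrow> 'a fract \<Rightarrow> int" where
  "ord_at P g = (THE k. \<exists>a b. a \<noteq> 0 \<and> b \<noteq> 0 \<and> g = Fract a b \<and>
                        k = int (val_at P a) - int (val_at P b))"

definition H0 :: "('a::idom set \<Rightarrow> rat) \<Rightarrow> 'a fract set" where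
  "H0 D = {g. g \<noteq> 0 \<and> (\<forall>P. prime_divisor P \<longrightarrow> ord_at P g + \<lfloor>D P\<rfloor> \<ge> 0)} \<union> {0}"

text \<open>B is realised inside the multigraded ring K_0[N^r] (finitely supported
  functions from exponent vectors to K_0, with convolution product), as the
  elements whose degree-m component lies in H^0(floor(sum m_i D_i)).\<close>
definition section_ring :: "nat \<Rightarrow> (nat \<Rightarrow> 'a::idom set \<Rightarrow> rat) \<Rightarrow> ((nat \<Rightarrow>\<^sub>0 nat) \<Rightarrow>\<^sub>0 'a fract) set" where
  "section_ring r D = {f :: (nat \<Rightarrow>\<^sub>0 nat) \<Rightarrow>\<^sub>0 'a fract. \<forall>m::(nat \<Rightarrow>\<^sub>0 nat). Poly_Mapping.lookup f m \<noteq> 0 \<longrightarrow>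
      Poly_Mapping.keys m \<subseteq> {..<r} \<and> Poly_Mapping.lookup f m \<in> H0 (\<lambda>P. \<Sum>i<r. of_nat (Poly_Mapping.lookup m i) * D i P)}"

inductive_set A0_subalgebra :: "((nat \<Rightarrow>\<^sub>0 nat) \<Rightarrow>\<^sub>0 'a::idom fract) set \<Rightarrow> ((nat \<Rightarrow>\<^sub>0 nat) \<Rightarrow>\<^sub>0 'a fract) set"
  for G where
  gen: "x \<in> G \<Longrightarrow> x \<in> A0_subalgebra G"
| scalar: "Poly_Mapping.single 0 (to_fract a) \<in> A0_subalgebra G"
| add: "x \<in> A0_subalgebra G \<Longrightarrow> y \<in> A0_subalgebra G \<Longrightarrow> x + y \<in> A0_subalgebra G"
| mult: "x \<in> A0_subalgebra G \<Longrightarrow> y \<in> A0_subalgebra G \<Longrightarrow> x * y \<in> A0_subalgebra G"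

definition finitely_generated_A0_algebra :: "((nat \<Rightarrow>\<^sub>0 nat) \<Rightarrow>\<^sub>0 'a::idom fract) set \<Rightarrow> bool" where
  "finitely_generated_A0_algebra B \<longleftrightarrow> (\<exists>G. finite G \<and> G \<subseteq> B \<and> A0_subalgebra G = B)"

end

theory Submission
  imports Defs
begin

text \<open>
  At a height-one prime \<open>Q\<close> of the Noetherian integrally closed domain \<open>A\<close> there is a uniformizer
  \<open>\<pi>\<close> with \<open>Q A\<^sub>Q = \<pi> A\<^sub>Q\<close> (otherwise some \<open>b/a \<notin> A\<^sub>Q\<close> would stabilize \<open>Q A\<^sub>Q\<close> and be integral), so every
  nonzero element is a power of \<open>\<pi>\<close> times a unit of \<open>A\<^sub>Q\<close> and \<open>ord\<^sub>Q\<close> is a discrete valuation.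
  Together with the finiteness of the primes containing a given element and approximation, this
  shows that every \<open>H\<^sup>0(E)\<close> of an integral divisor is a finitely generated \<open>A\<close>-module and that
  \<open>H\<^sup>0(E\<^sub>1 + E\<^sub>2)\<close> is spanned by \<open>H\<^sup>0(E\<^sub>1) H\<^sup>0(E\<^sub>2)\<close>.
  Choosing \<open>N > 0\<close> with all \<open>N D\<^sub>i\<close> integral, \<open>\<lfloor>(m + N e\<^sub>i) D\<rfloor> = N D\<^sub>i + \<lfloor>m D\<rfloor>\<close>, so by induction on the
  total degree \<open>B\<close> is generated by its finitely many, finitely generated graded pieces with
  exponents in \<open>[0, N]\<^sup>r\<close>.
\<close>

section \<open>Ideals of Noetherian rings\<close>

lemma ring_ideal_0: "ring_ideal I \<Longrightarrow> 0 \<in> I"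
  by (simp add: ring_ideal_def)

lemma ring_ideal_add: "ring_ideal I \<Longrightarrow> x \<in> I \<Longrightarrow> y \<in> I \<Longrightarrow> x + y \<in> I"
  by (simp add: ring_ideal_def)

lemma ring_ideal_mult_left: "ring_ideal I \<Longrightarrow> x \<in> I \<Longrightarrow> r * x \<in> I"
  by (simp add: ring_ideal_def)

lemma ring_ideal_mult_right: "ring_ideal I \<Longrightarrow> x \<in> I \<Longrightarrow> x * r \<in> I"
  by (metis ring_ideal_mult_left mult.commute)

lemma ring_ideal_sum: "ring_ideal I \<Longrightarrow> (\<And>i. i \<in> A \<Longrightarrow> f i \<in> I) \<Longrightarrow> sum f A \<in> I"
  by (induction A rule: infinite_finite_induct) (auto simp: ring_ideal_0 ring_ideal_add)

lemma ring_ideal_one_imp_UNIV: "ring_ideal I \<Longrightarrow> 1 \<in> I \<Longrightarrow> I = UNIV"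
  by (metis UNIV_eq_I ring_ideal_mult_left mult.right_neutral)

lemma ring_ideal_principal: "ring_ideal (range (\<lambda>r. a * r))"
  unfolding ring_ideal_def
proof (intro conjI ballI allI)
  show "0 \<in> range (\<lambda>r. a * r)" using rangeI[of "\<lambda>r. a * r" 0] by simp
next
  fix x y assume "x \<in> range (\<lambda>r. a * r)" "y \<in> range (\<lambda>r. a * r)"
  then obtain u v where "x = a * u" "y = a * v" by blast
  then show "x + y \<in> range (\<lambda>r. a * r)" using rangeI[of "\<lambda>r. a * r" "u + v"] by (simp add: distrib_left)
next
  fix c x assume "x \<in> range (\<lambda>r. a * r)"
  then obtain u where "x = a * u" by blast
  then show "c * x \<in> range (\<lambda>r. a * r)" using rangeI[of "\<lambda>r. a * r" "c * u"] by (simp add: mult.left_commute)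
qed

lemma ring_ideal_adjoin:
  assumes M: "ring_ideal M"
  shows "ring_ideal {m + r * x | m r. m \<in> M}" "M \<subseteq> {m + r * x | m r. m \<in> M}"
    "x \<in> {m + r * x | m r. m \<in> M}"
proof -
  show "ring_ideal {m + r * x | m r. m \<in> M}" unfolding ring_ideal_def
  proof (intro conjI ballI allI)
    show "0 \<in> {m + r * x |m r. m \<in> M}" using ring_ideal_0[OF M]
      by (intro CollectI exI[of _ 0] exI[of _ 0]) simp
  next
    fix a b assume "a \<in> {m + r * x |m r. m \<in> M}" "b \<in> {m + r * x |m r. m \<in> M}"
    then obtain m r m' r' where "a = m + r * x" "b = m' + r' * x" "m \<in> M" "m' \<in> M" by blast
    then show "a + b \<in> {m + r * x |m r. m \<in> M}"
      by (intro CollectI exI[of _ "m + m'"] exI[of _ "r + r'"]) (auto simp: algebra_simps ring_ideal_add[OF M])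
  next
    fix c a assume "a \<in> {m + r * x |m r. m \<in> M}"
    then obtain m r where "a = m + r * x" "m \<in> M" by blast
    then show "c * a \<in> {m + r * x |m r. m \<in> M}"
      by (intro CollectI exI[of _ "c * m"] exI[of _ "c * r"]) (auto simp: algebra_simps ring_ideal_mult_left[OF M])
  qed
  show "M \<subseteq> {m + r * x | m r. m \<in> M}"
    by (force intro: exI[of _ 0])
  show "x \<in> {m + r * x | m r. m \<in> M}"
    using ring_ideal_0[OF M] by (intro CollectI exI[of _ 0] exI[of _ 1]) simp
qed

lemma ring_ideal_ideal_span: "ring_ideal (ideal_span S)"
proof -
  have "0 \<in> ideal_span S"
    unfolding ideal_span_def by (rule CollectI, rule exI[of _ 0]) simp
  moreover have "x + y \<in> ideal_span S" if xy: "x \<in> ideal_span S" "y \<in> ideal_span S" for x y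
  proof -
    obtain k :: nat and c s where 1: "\<forall>i<k. s i \<in> S" "x = (\<Sum>i<k. c i * s i)"
      using xy(1) unfolding ideal_span_def mem_Collect_eq by blast
    obtain k' :: nat and c' s' where 2: "\<forall>i<k'. s' i \<in> S" "y = (\<Sum>i<k'. c' i * s' i)"
      using xy(2) unfolding ideal_span_def mem_Collect_eq by blast
    define C where "C i = (if i < k then c i else c' (i - k))" for i
    define T where "T i = (if i < k then s i else s' (i - k))" for i
    have "(\<Sum>i<k+k'. C i * T i) = (\<Sum>i<k. C i * T i) + (\<Sum>i=k..<k+k'. C i * T i)"
      by (simp add: lessThan_atLeast0 sum.atLeastLessThan_concat)
    also have "(\<Sum>i<k. C i * T i) = (\<Sum>i<k. c i * s i)"
      by (rule sum.cong) (auto simp: C_def T_def)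
    also have "(\<Sum>i=k..<k+k'. C i * T i) = (\<Sum>i=0..<k'. C (i + k) * T (i + k))"
      using sum.shift_bounds_nat_ivl[of "\<lambda>i. C i * T i" 0 k k'] by (simp add: add.commute)
    also have "\<dots> = (\<Sum>i<k'. c' i * s' i)"
      by (rule sum.cong) (auto simp: C_def T_def)
    finally have "x + y = (\<Sum>i<k+k'. C i * T i)" using 1 2 by simp
    moreover have "\<forall>i<k+k'. T i \<in> S" using 1 2 by (auto simp: T_def)
    ultimately show ?thesis
      unfolding ideal_span_def mem_Collect_eq by (intro exI[of _ "k+k'"] exI[of _ C] exI[of _ T]) simp
  qed
  moreover have "r * x \<in> ideal_span S" if x: "x \<in> ideal_span S" for r x
  proof -
    obtain k :: nat and c s where 1: "\<forall>i<k. s i \<in> S" "x = (\<Sum>i<k. c i * s i)"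
      using x unfolding ideal_span_def mem_Collect_eq by blast
    have "r * x = (\<Sum>i<k. (r * c i) * s i)" using 1 by (simp add: sum_distrib_left mult.assoc)
    then show ?thesis
      using 1 unfolding ideal_span_def mem_Collect_eq by (intro exI[of _ k] exI[of _ "\<lambda>i. r * c i"] exI[of _ s]) simp
  qed
  ultimately show ?thesis unfolding ring_ideal_def by blast
qed

lemma ideal_span_least: "ring_ideal I \<Longrightarrow> S \<subseteq> I \<Longrightarrow> ideal_span S \<subseteq> I"
  unfolding ideal_span_def by (auto intro!: ring_ideal_sum ring_ideal_mult_left)

lemma ideal_span_base: "x \<in> S \<Longrightarrow> x \<in> ideal_span S"
  unfolding ideal_span_def
  by (rule CollectI, rule exI[of _ 1], rule exI[of _ "\<lambda>_. 1"], rule exI[of _ "\<lambda>_. x"]) simp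

definition colon_ideal :: "'a::comm_ring_1 set \<Rightarrow> 'a \<Rightarrow> 'a set" where
  "colon_ideal I b = {r. r * b \<in> I}"

lemma ring_ideal_colon_ideal: "ring_ideal I \<Longrightarrow> ring_ideal (colon_ideal I b)"
  unfolding ring_ideal_def colon_ideal_def by (simp add: distrib_right mult.assoc)

lemma maximal_colon_ideal_prime:
  assumes I: "ring_ideal I" and b: "1 \<notin> colon_ideal I b"
    and max: "\<And>c. colon_ideal I b \<subseteq> colon_ideal I c \<Longrightarrow> 1 \<notin> colon_ideal I c \<Longrightarrow> colon_ideal I c = colon_ideal I b"
  shows "prime_ideal (colon_ideal I b)"
proof -
  have "y \<in> colon_ideal I b" if xy: "x * y \<in> colon_ideal I b" "x \<notin> colon_ideal I b" for x y
  proof -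
    have "colon_ideal I b \<subseteq> colon_ideal I (x * b)"
    proof
      fix r assume "r \<in> colon_ideal I b"
      then have "x * (r * b) \<in> I" using ring_ideal_mult_left[OF I] by (simp add: colon_ideal_def)
      then show "r \<in> colon_ideal I (x * b)" by (simp add: colon_ideal_def mult.left_commute)
    qed
    moreover have "1 \<notin> colon_ideal I (x * b)"
      using xy(2) by (simp add: colon_ideal_def)
    ultimately have "colon_ideal I (x * b) = colon_ideal I b" by (rule max)
    moreover have "y \<in> colon_ideal I (x * b)"
      using xy(1) by (simp add: colon_ideal_def ac_simps)
    ultimately show ?thesis by simp
  qed
  then show ?thesis
    using ring_ideal_colon_ideal[OF I] b unfolding prime_ideal_def by blast
qed

lemma noetherian_ascending_chain:
  assumes "noetherian_ring TYPE('a::comm_ring_1)"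
    and I: "\<And>n. ring_ideal (I n :: 'a set)" and mono: "\<And>n. I n \<subseteq> I (Suc n)"
  shows "\<exists>N. I (Suc N) \<subseteq> I N"
proof -
  have le: "I m \<subseteq> I n" if "m \<le> n" for m n
    using that by (induction n) (auto simp: le_Suc_eq dest: mono[THEN subsetD])
  define U where "U = (\<Union>n. I n)"
  have "ring_ideal U" unfolding ring_ideal_def
  proof (intro conjI ballI allI)
    show "0 \<in> U" unfolding U_def using ring_ideal_0[OF I[of 0]] by blast
  next
    fix x y assume "x \<in> U" "y \<in> U"
    then obtain m n where "x \<in> I m" "y \<in> I n" using U_def by auto
    then have "x \<in> I (max m n)" "y \<in> I (max m n)" using le[of m "max m n"] le[of n "max m n"] by auto
    then show "x + y \<in> U" unfolding U_def using ring_ideal_add[OF I] by blast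
  next
    fix r x assume "x \<in> U"
    then show "r * x \<in> U" unfolding U_def using ring_ideal_mult_left[OF I] by blast
  qed
  then obtain S where S: "finite S" "U = ideal_span S"
    using assms(1) unfolding noetherian_ring_def by blast
  have "\<exists>n. s \<in> I n" if "s \<in> S" for s
    using S(2) ideal_span_base[OF that] unfolding U_def by blast
  then obtain f where f: "\<And>s. s \<in> S \<Longrightarrow> s \<in> I (f s)" by metis
  define N where "N = Max (insert 0 (f ` S))"
  have "S \<subseteq> I N"
  proof
    fix s assume "s \<in> S"
    then have "f s \<le> N" using S(1) N_def by simp
    then show "s \<in> I N" using f[OF \<open>s \<in> S\<close>] le[of "f s" N] by blast
  qed
  then have "ideal_span S \<subseteq> I N" by (rule ideal_span_least[OF I])
  then show ?thesis using S(2) unfolding U_def by blast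
qed

lemma noetherian_maximal_element:
  assumes "noetherian_ring TYPE('a::comm_ring_1)"
    and "\<And>J. J \<in> \<F> \<Longrightarrow> ring_ideal (J :: 'a set)" and "I0 \<in> \<F>"
  shows "\<exists>M\<in>\<F>. \<forall>J\<in>\<F>. M \<subseteq> J \<longrightarrow> J = M"
proof (rule ccontr)
  assume "\<not> ?thesis"
  then obtain f where f: "\<forall>M\<in>\<F>. f M \<in> \<F> \<and> M \<subset> f M" by (metis psubsetI)
  define I where "I n = (f ^^ n) I0" for n
  have inF: "I n \<in> \<F>" for n by (induction n) (auto simp: I_def f assms(3))
  have "I n \<subset> I (Suc n)" for n using f inF by (simp add: I_def)
  moreover obtain N where "I (Suc N) \<subseteq> I N"
    using noetherian_ascending_chain[OF assms(1), of I] inF assms(2) calculation by blast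
  ultimately show False by (metis psubset_eq order.antisym)
qed

lemma maximal_ideal_imp_prime:
  assumes "maximal_ideal (M::'a::comm_ring_1 set)" shows "prime_ideal M"
proof -
  have M: "ring_ideal M" "M \<noteq> UNIV" using assms by (auto simp: maximal_ideal_def)
  have "y \<in> M" if xy: "x * y \<in> M" "x \<notin> M" for x y
  proof -
    define J where "J = {m + r * x | m r. m \<in> M}"
    have "J = UNIV"
      using assms ring_ideal_adjoin[OF M(1), of x] xy(2) unfolding maximal_ideal_def J_def by blast
    then obtain m r where "1 = m + r * x" "m \<in> M" unfolding J_def by blast
    then have "y = m * y + r * (x * y)" by (metis mult_1 distrib_right mult.assoc)
    then show "y \<in> M"
      using ring_ideal_add[OF M(1) ring_ideal_mult_right[OF M(1) \<open>m \<in> M\<close>, of y] ring_ideal_mult_left[OF M(1) xy(1), of r]]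
      by simp
  qed
  then show ?thesis using M unfolding prime_ideal_def by blast
qed

lemma exists_maximal_ideal:
  assumes "noetherian_ring TYPE('a::comm_ring_1)" "ring_ideal (I::'a set)" "1 \<notin> I"
  shows "\<exists>M. maximal_ideal M \<and> I \<subseteq> M"
proof -
  define \<F> where "\<F> = {J. ring_ideal J \<and> I \<subseteq> J \<and> (1::'a) \<notin> J}"
  obtain M where M: "M \<in> \<F>" "\<forall>J\<in>\<F>. M \<subseteq> J \<longrightarrow> J = M"
    using noetherian_maximal_element[OF assms(1), of \<F> I] assms unfolding \<F>_def by blast
  have "maximal_ideal M" unfolding maximal_ideal_def
  proof (intro conjI allI impI)
    show "ring_ideal M" "M \<noteq> UNIV" using M(1) by (auto simp: \<F>_def)
  next
    fix J assume J: "ring_ideal J \<and> M \<subseteq> J"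
    show "J = M \<or> J = UNIV"
    proof (cases "1 \<in> J")
      case True then show ?thesis using ring_ideal_one_imp_UNIV J by blast
    next
      case False then have "J \<in> \<F>" using J M(1) by (auto simp: \<F>_def)
      then show ?thesis using M(2) J by blast
    qed
  qed
  then show ?thesis using M(1) \<F>_def by blast
qed

definition A_submodule :: "'a::idom fract set \<Rightarrow> bool" where
  "A_submodule M \<longleftrightarrow> 0 \<in> M \<and> (\<forall>x\<in>M. \<forall>y\<in>M. x + y \<in> M) \<and> (\<forall>a. \<forall>x\<in>M. to_fract a * x \<in> M)"

lemma ring_ideal_denominators:
  assumes "A_submodule M" shows "ring_ideal {a. to_fract a * g \<in> M}"
  using assms unfolding A_submodule_def ring_ideal_def
  by (simp add: distrib_right) (metis mult.assoc to_fract_mult)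

inductive_set A_span :: "'a::idom fract set \<Rightarrow> 'a fract set" for X where
  zero: "0 \<in> A_span X"
| base: "x \<in> X \<Longrightarrow> x \<in> A_span X"
| add: "x \<in> A_span X \<Longrightarrow> y \<in> A_span X \<Longrightarrow> x + y \<in> A_span X"
| smult: "x \<in> A_span X \<Longrightarrow> to_fract a * x \<in> A_span X"

lemma A_submodule_A_span: "A_submodule (A_span X)"
  unfolding A_submodule_def by (blast intro: A_span.intros)

lemma A_span_least: "A_submodule M \<Longrightarrow> X \<subseteq> M \<Longrightarrow> A_span X \<subseteq> M"
proof
  fix x assume "A_submodule M" "X \<subseteq> M" "x \<in> A_span X"
  then show "x \<in> M" by (induction rule: A_span.induct[OF \<open>x \<in> A_span X\<close>]) (auto simp: A_submodule_def)
qed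

locale dedekind =
  fixes T :: "'a::idom itself"
  assumes dedekind: "dedekind_domain T"
begin

lemma noetherian: "noetherian_ring TYPE('a)"
  using dedekind by (simp add: dedekind_domain_def noetherian_ring_def)

lemma nonzero_prime_maximal: "prime_ideal P \<Longrightarrow> P \<noteq> {0} \<Longrightarrow> maximal_ideal (P::'a set)"
  using dedekind unfolding dedekind_domain_def dim_le_one_def by blast

lemma integrally_closed_poly:
  "lead_coeff (p::'a poly) = 1 \<Longrightarrow> poly (map_poly to_fract p) x = 0 \<Longrightarrow> x \<in> range to_fract"
  using dedekind unfolding dedekind_domain_def integrally_closed_def by blast

end

lemma to_fract_power [simp]: "to_fract (x ^ n) = to_fract (x::'a::idom) ^ n"
  by (induction n) auto

lemma map_poly_to_fract_sum:
  "map_poly to_fract (\<Sum>i\<in>A. f i) = (\<Sum>i\<in>A. map_poly to_fract (f i :: 'a::idom poly))"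
  by (induction A rule: infinite_finite_induct) auto

section \<open>The discrete valuation at a height-one prime\<close>

locale dedekind_prime = dedekind T for T :: "'a::idom itself" +
  fixes Q :: "'a set"
  assumes Q_prime_divisor: "prime_divisor Q"
begin

lemma Q_prime_ideal: "prime_ideal Q" and Q_nonzero: "Q \<noteq> {0}"
  using Q_prime_divisor by (auto simp: prime_divisor_def)

lemma Q_ring_ideal: "ring_ideal Q"
  using Q_prime_ideal by (simp add: prime_ideal_def)

lemma Q_ne_UNIV: "Q \<noteq> UNIV"
  using Q_prime_ideal by (simp add: prime_ideal_def)

lemma one_notin_Q: "1 \<notin> Q"
  using ring_ideal_one_imp_UNIV[OF Q_ring_ideal] Q_ne_UNIV by blast

lemma zero_in_Q: "0 \<in> Q"
  using ring_ideal_0[OF Q_ring_ideal] .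

lemma notin_Q_mult: "s \<notin> Q \<Longrightarrow> t \<notin> Q \<Longrightarrow> s * t \<notin> Q"
  using Q_prime_ideal by (auto simp: prime_ideal_def)

lemma notin_Q_nonzero: "s \<notin> Q \<Longrightarrow> s \<noteq> 0"
  using zero_in_Q by blast

lemma Q_mult_left: "q \<in> Q \<Longrightarrow> r * q \<in> Q"
  using ring_ideal_mult_left[OF Q_ring_ideal] .

lemma Q_mult_right: "q \<in> Q \<Longrightarrow> q * r \<in> Q"
  using ring_ideal_mult_right[OF Q_ring_ideal] .

definition loc :: "'a fract set" where
  "loc = {to_fract x / to_fract s | x s. s \<notin> Q}"

definition loc_max :: "'a fract set" where
  "loc_max = {to_fract x / to_fract s | x s. x \<in> Q \<and> s \<notin> Q}"

lemma loc_to_fract: "to_fract x \<in> loc"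
  unfolding loc_def by (rule CollectI, rule exI[of _ x], rule exI[of _ 1]) (simp add: one_notin_Q)

lemma loc_max_to_fract: "x \<in> Q \<Longrightarrow> to_fract x \<in> loc_max"
  unfolding loc_max_def by (rule CollectI, rule exI[of _ x], rule exI[of _ 1]) (simp add: one_notin_Q)

lemma loc_max_subset: "loc_max \<subseteq> loc"
  unfolding loc_max_def loc_def by blast

lemma loc_0: "0 \<in> loc"
  using loc_to_fract[of 0] by simp

lemma loc_add:
  assumes "r \<in> loc" "r' \<in> loc" shows "r + r' \<in> loc"
proof -
  obtain x s x' s' where rs: "r = to_fract x / to_fract s" "s \<notin> Q" "r' = to_fract x' / to_fract s'" "s' \<notin> Q"
    using assms unfolding loc_def by blast
  have "r + r' = to_fract (x * s' + x' * s) / to_fract (s * s')"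
    using rs notin_Q_nonzero[OF rs(2)] notin_Q_nonzero[OF rs(4)] by (simp add: field_simps)
  then show ?thesis unfolding loc_def using notin_Q_mult[OF rs(2,4)] by blast
qed

lemma loc_mult:
  assumes "r \<in> loc" "r' \<in> loc" shows "r * r' \<in> loc"
proof -
  obtain x s x' s' where rs: "r = to_fract x / to_fract s" "s \<notin> Q" "r' = to_fract x' / to_fract s'" "s' \<notin> Q"
    using assms unfolding loc_def by blast
  have "r * r' = to_fract (x * x') / to_fract (s * s')"
    using rs by simp
  then show ?thesis unfolding loc_def using notin_Q_mult[OF rs(2,4)] by blast
qed

lemma loc_divide:
  assumes "r \<in> loc" "t \<notin> Q" shows "r / to_fract t \<in> loc"
proof -
  obtain x s where rs: "r = to_fract x / to_fract s" "s \<notin> Q"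
    using assms unfolding loc_def by blast
  have "r / to_fract t = to_fract x / to_fract (s * t)" using rs by simp
  then show ?thesis unfolding loc_def using notin_Q_mult[OF rs(2) assms(2)] by blast
qed

lemma loc_common_denominator:
  "(\<forall>i\<le>(N::nat). r i \<in> loc) \<Longrightarrow> \<exists>\<sigma> c. \<sigma> \<notin> Q \<and> (\<forall>i\<le>N. r i = to_fract (c i) / to_fract \<sigma>)"
proof (induction N)
  case 0
  then obtain x s where "r 0 = to_fract x / to_fract s" "s \<notin> Q" unfolding loc_def by auto
  then show ?case by (intro exI[of _ s] exI[of _ "\<lambda>_. x"]) auto
next
  case (Suc N)
  then obtain \<sigma> c where \<sigma>c: "\<sigma> \<notin> Q" "\<forall>i\<le>N. r i = to_fract (c i) / to_fract \<sigma>" by auto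
  obtain x s where xs: "r (Suc N) = to_fract x / to_fract s" "s \<notin> Q" using Suc.prems unfolding loc_def by auto
  define c' where "c' i = (if i \<le> N then c i * s else x * \<sigma>)" for i
  have "\<forall>i\<le>Suc N. r i = to_fract (c' i) / to_fract (\<sigma> * s)"
  proof (intro allI impI)
    fix i assume "i \<le> Suc N"
    then consider "i \<le> N" | "i = Suc N" by linarith
    then show "r i = to_fract (c' i) / to_fract (\<sigma> * s)"
    proof cases
      case 1 then show ?thesis using \<sigma>c(2) notin_Q_nonzero[OF xs(2)] by (simp add: c'_def)
    next
      case 2 then show ?thesis using xs(1) notin_Q_nonzero[OF \<sigma>c(1)] by (simp add: c'_def)
    qed
  qed
  then show ?case using notin_Q_mult[OF \<sigma>c(1) xs(2)] by blast
qed

lemma integral_over_loc_imp_loc: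
  assumes \<sigma>: "\<sigma> \<notin> Q" and yN: "y ^ Suc N = (\<Sum>i\<le>N. (to_fract (c i) / to_fract \<sigma>) * y ^ i)"
  shows "y \<in> loc"
proof -
  have signz: "to_fract \<sigma> \<noteq> 0" using notin_Q_nonzero[OF \<sigma>] by simp
  define z where "z = to_fract \<sigma> * y"
  define p where "p = monom 1 (Suc N) - (\<Sum>i\<le>N. monom (c i * \<sigma> ^ (N - i)) i)"
  have "z ^ Suc N = to_fract \<sigma> ^ Suc N * y ^ Suc N" by (simp add: z_def power_mult_distrib)
  also have "\<dots> = (\<Sum>i\<le>N. to_fract \<sigma> ^ Suc N * ((to_fract (c i) / to_fract \<sigma>) * y ^ i))"
    using yN by (simp add: sum_distrib_left)
  also have "\<dots> = (\<Sum>i\<le>N. to_fract (c i * \<sigma> ^ (N - i)) * z ^ i)"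
  proof (rule sum.cong)
    fix i assume "i \<in> {..N}"
    then have "N = (N - i) + i" by simp
    then have "to_fract \<sigma> ^ N = to_fract \<sigma> ^ (N - i) * to_fract \<sigma> ^ i" by (metis power_add)
    then show "to_fract \<sigma> ^ Suc N * ((to_fract (c i) / to_fract \<sigma>) * y ^ i) = to_fract (c i * \<sigma> ^ (N - i)) * z ^ i"
      using signz by (simp add: z_def power_mult_distrib field_simps)
  qed simp
  finally have zeq: "z ^ Suc N = (\<Sum>i\<le>N. to_fract (c i * \<sigma> ^ (N - i)) * z ^ i)" .
  have "poly (map_poly to_fract p) z = z ^ Suc N - (\<Sum>i\<le>N. to_fract (c i * \<sigma> ^ (N - i)) * z ^ i)"
    unfolding p_def by (simp add: map_poly_to_fract_sum map_poly_monom poly_sum poly_monom)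
  then have p0: "poly (map_poly to_fract p) z = 0" using zeq by simp
  have cN: "coeff p (Suc N) = 1" unfolding p_def by (simp add: coeff_sum)
  have "degree p \<le> Suc N" unfolding p_def
    by (intro degree_diff_le degree_monom_le degree_sum_le) (auto intro: order.trans[OF degree_monom_le])
  moreover have "Suc N \<le> degree p" using cN by (intro le_degree) simp
  ultimately have "degree p = Suc N" by simp
  then have "lead_coeff p = 1" using cN by simp
  then have "z \<in> range to_fract" using integrally_closed_poly p0 by blast
  then obtain w where "z = to_fract w" by blast
  then have "y = to_fract w / to_fract \<sigma>" using signz by (simp add: z_def field_simps)
  then show ?thesis unfolding loc_def using \<sigma> by blast
qed

definition loc_poly_multiples :: "'a \<Rightarrow> 'a fract \<Rightarrow> nat \<Rightarrow> 'a set" where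
  "loc_poly_multiples a y n = {x. \<exists>r. (\<forall>i\<le>n. r i \<in> loc) \<and> to_fract x = to_fract a * (\<Sum>i\<le>n. r i * y ^ i)}"

lemma ring_ideal_loc_poly_multiples: "ring_ideal (loc_poly_multiples a y n)"
  unfolding ring_ideal_def
proof (intro conjI ballI allI)
  show "0 \<in> loc_poly_multiples a y n"
    unfolding loc_poly_multiples_def using loc_0 by (intro CollectI exI[of _ "\<lambda>_. 0"]) simp
next
  fix x x' assume "x \<in> loc_poly_multiples a y n" "x' \<in> loc_poly_multiples a y n"
  then obtain r r' where "\<forall>i\<le>n. r i \<in> loc" "to_fract x = to_fract a * (\<Sum>i\<le>n. r i * y ^ i)"
    "\<forall>i\<le>n. r' i \<in> loc" "to_fract x' = to_fract a * (\<Sum>i\<le>n. r' i * y ^ i)"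
    unfolding loc_poly_multiples_def by blast
  then show "x + x' \<in> loc_poly_multiples a y n" unfolding loc_poly_multiples_def
    by (intro CollectI exI[of _ "\<lambda>i. r i + r' i"]) (simp add: loc_add distrib_left distrib_right sum.distrib)
next
  fix c x assume "x \<in> loc_poly_multiples a y n"
  then obtain r where "\<forall>i\<le>n. r i \<in> loc" "to_fract x = to_fract a * (\<Sum>i\<le>n. r i * y ^ i)"
    unfolding loc_poly_multiples_def by blast
  then show "c * x \<in> loc_poly_multiples a y n" unfolding loc_poly_multiples_def
    by (intro CollectI exI[of _ "\<lambda>i. to_fract c * r i"]) (simp add: loc_mult loc_to_fract sum_distrib_left algebra_simps)
qed

lemma loc_poly_multiples_mono: "loc_poly_multiples a y n \<subseteq> loc_poly_multiples a y (Suc n)"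
proof
  fix x assume "x \<in> loc_poly_multiples a y n"
  then obtain r where r: "\<forall>i\<le>n. r i \<in> loc" "to_fract x = to_fract a * (\<Sum>i\<le>n. r i * y ^ i)"
    unfolding loc_poly_multiples_def by blast
  define r' where "r' i = (if i \<le> n then r i else 0)" for i
  have "(\<Sum>i\<le>Suc n. r' i * y ^ i) = (\<Sum>i\<le>n. r i * y ^ i)"
    by (simp add: r'_def)
  then show "x \<in> loc_poly_multiples a y (Suc n)" unfolding loc_poly_multiples_def using r loc_0
    by (intro CollectI exI[of _ r']) (simp add: r'_def)
qed

text \<open>All \<open>a y\<^sup>k\<close> lie in \<open>A\<^sub>Q\<close>; the stabilization of the chain \<open>a A\<^sub>Q[y]\<^sub>\<le>\<^sub>n \<inter> A\<close> produces a monic equation for \<open>y\<close>.\<close>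

lemma loc_max_multiplier_integral:
  assumes a: "a \<in> Q" "a \<noteq> 0" and y: "\<forall>x\<in>loc_max. y * x \<in> loc_max"
  shows "\<exists>N \<sigma> c. \<sigma> \<notin> Q \<and> y ^ Suc N = (\<Sum>i\<le>N. (to_fract (c i) / to_fract \<sigma>) * y ^ i)"
proof -
  have aR: "to_fract a * y ^ k \<in> loc_max" for k
  proof (induction k)
    case 0 then show ?case using loc_max_to_fract[OF a(1)] by simp
  next
    case (Suc k)
    have eq: "to_fract a * y ^ Suc k = y * (to_fract a * y ^ k)" by (simp add: algebra_simps)
    show ?case unfolding eq using y Suc by blast
  qed
  define J where "J = loc_poly_multiples a y"
  obtain N where N: "J (Suc N) \<subseteq> J N"
    using noetherian_ascending_chain[OF noetherian, of J] ring_ideal_loc_poly_multiples loc_poly_multiples_mono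
    unfolding J_def by blast
  have "to_fract a * y ^ Suc N \<in> loc" using aR loc_max_subset by blast
  then obtain x s where xs: "to_fract a * y ^ Suc N = to_fract x / to_fract s" "s \<notin> Q"
    unfolding loc_def by blast
  have snz: "to_fract s \<noteq> 0" using notin_Q_nonzero[OF xs(2)] by simp
  have "x \<in> J (Suc N)" unfolding J_def loc_poly_multiples_def
  proof (intro CollectI exI[of _ "\<lambda>i. if i = Suc N then to_fract s else 0"] conjI)
    show "\<forall>i\<le>Suc N. (if i = Suc N then to_fract s else 0) \<in> loc" using loc_0 loc_to_fract by simp
    have "(\<Sum>i\<le>Suc N. (if i = Suc N then to_fract s else 0) * y ^ i) = to_fract s * y ^ Suc N"
      by (simp add: sum.atMost_Suc)
    then show "to_fract x = to_fract a * (\<Sum>i\<le>Suc N. (if i = Suc N then to_fract s else 0) * y ^ i)"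
      using xs snz by (simp add: field_simps)
  qed
  with N have "x \<in> J N" by blast
  then obtain r where r: "\<forall>i\<le>N. r i \<in> loc" "to_fract x = to_fract a * (\<Sum>i\<le>N. r i * y ^ i)"
    unfolding J_def loc_poly_multiples_def by blast
  have "to_fract a * (to_fract s * y ^ Suc N) = to_fract a * (\<Sum>i\<le>N. r i * y ^ i)"
    using xs snz r(2) by (simp add: field_simps)
  then have "to_fract s * y ^ Suc N = (\<Sum>i\<le>N. r i * y ^ i)" using a(2) by simp
  then have yN: "y ^ Suc N = (\<Sum>i\<le>N. (r i / to_fract s) * y ^ i)"
    using snz by (simp add: sum_divide_distrib[symmetric] field_simps)
  have "\<forall>i\<le>N. r i / to_fract s \<in> loc" using r(1) loc_divide xs(2) by blast
  then obtain \<sigma> c where sc: "\<sigma> \<notin> Q" "\<forall>i\<le>N. r i / to_fract s = to_fract (c i) / to_fract \<sigma>"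
    using loc_common_denominator[of N "\<lambda>i. r i / to_fract s"] by blast
  then show ?thesis using yN by auto
qed

lemma loc_max_multiplier_in_loc:
  assumes "a \<in> Q" "a \<noteq> 0" and "\<forall>x\<in>loc_max. y * x \<in> loc_max"
  shows "y \<in> loc"
  using loc_max_multiplier_integral[OF assms] integral_over_loc_imp_loc by blast

text \<open>\<open>loc_multiples c\<close> is the contraction \<open>c A\<^sub>Q \<inter> A\<close>.\<close>

definition loc_multiples :: "'a \<Rightarrow> 'a set" where
  "loc_multiples c = {x. \<exists>\<sigma> d. \<sigma> \<notin> Q \<and> \<sigma> * x = c * d}"

lemma ring_ideal_loc_multiples: "ring_ideal (loc_multiples c)"
  unfolding ring_ideal_def
proof (intro conjI ballI allI)
  show "0 \<in> loc_multiples c"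
    unfolding loc_multiples_def by (intro CollectI exI[of _ 1] exI[of _ 0]) (simp add: one_notin_Q)
next
  fix x y assume "x \<in> loc_multiples c" "y \<in> loc_multiples c"
  then obtain \<sigma> d \<sigma>' d' where h: "\<sigma> \<notin> Q" "\<sigma> * x = c * d" "\<sigma>' \<notin> Q" "\<sigma>' * y = c * d'"
    unfolding loc_multiples_def by blast
  have "\<sigma> * \<sigma>' * (x + y) = c * (\<sigma>' * d + \<sigma> * d')"
    using h by (simp add: algebra_simps)
  then show "x + y \<in> loc_multiples c"
    unfolding loc_multiples_def using notin_Q_mult[OF h(1,3)] by blast
next
  fix r x assume "x \<in> loc_multiples c"
  then obtain \<sigma> d where h: "\<sigma> \<notin> Q" "\<sigma> * x = c * d" unfolding loc_multiples_def by blast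
  have "\<sigma> * (r * x) = c * (r * d)" using h by (metis mult.assoc mult.left_commute)
  then show "r * x \<in> loc_multiples c" unfolding loc_multiples_def using h(1) by blast
qed

lemma mult_in_loc_multiples: "c * d \<in> loc_multiples c"
  unfolding loc_multiples_def by (intro CollectI exI[of _ 1] exI[of _ d]) (simp add: one_notin_Q)

lemma uniformizer_of_unit_colon:
  assumes QC: "Q = colon_ideal (loc_multiples a) b" and "b \<noteq> 0"
    and h: "q \<in> Q" "s \<notin> Q" "s * (q * b) = a * d" "d \<notin> Q"
  shows "Q \<subseteq> loc_multiples q"
proof
  fix q' assume "q' \<in> Q"
  then obtain s' d' where h': "s' \<notin> Q" "s' * (q' * b) = a * d'"
    using QC unfolding colon_ideal_def loc_multiples_def by blast
  have "b * (d * s' * q') = d * (s' * (q' * b))" by (simp add: algebra_simps)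
  also have "\<dots> = d' * (s * (q * b))" using h(3) h'(2) by (simp add: algebra_simps)
  also have "\<dots> = b * (q * (d' * s))" by (simp add: algebra_simps)
  finally have "(d * s') * q' = q * (d' * s)" using \<open>b \<noteq> 0\<close> by simp
  then show "q' \<in> loc_multiples q"
    unfolding loc_multiples_def using notin_Q_mult[OF h(4) h'(1)] by blast
qed

text \<open>If no element of \<open>Q\<close> has a unit cofactor, then \<open>b/a\<close> stabilizes \<open>Q A\<^sub>Q\<close>, hence lies in \<open>A\<^sub>Q\<close>.\<close>

lemma colon_without_unit_cofactor:
  assumes a: "a \<in> Q" "a \<noteq> 0" and QC: "Q = colon_ideal (loc_multiples a) b"
    and no_unit: "\<And>q s d. q \<in> Q \<Longrightarrow> s \<notin> Q \<Longrightarrow> s * (q * b) = a * d \<Longrightarrow> d \<in> Q"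
  shows "1 \<in> colon_ideal (loc_multiples a) b"
proof -
  define y where "y = to_fract b / to_fract a"
  have "\<forall>x\<in>loc_max. y * x \<in> loc_max"
  proof
    fix x assume "x \<in> loc_max"
    then obtain u t where ut: "x = to_fract u / to_fract t" "u \<in> Q" "t \<notin> Q" unfolding loc_max_def by blast
    then obtain \<sigma> d where h: "\<sigma> \<notin> Q" "\<sigma> * (u * b) = a * d"
      using QC unfolding colon_ideal_def loc_multiples_def by blast
    have "to_fract \<sigma> * to_fract u * to_fract b = to_fract a * to_fract d"
      using arg_cong[OF h(2), of to_fract] by (simp add: mult.assoc)
    then have "y * x = to_fract d / to_fract (\<sigma> * t)"
      unfolding y_def ut(1) using notin_Q_nonzero[OF h(1)] notin_Q_nonzero[OF ut(3)] a(2)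
      by (simp add: field_simps)
    then show "y * x \<in> loc_max"
      unfolding loc_max_def using no_unit[OF ut(2) h] notin_Q_mult[OF h(1) ut(3)] by blast
  qed
  then have "y \<in> loc" using loc_max_multiplier_in_loc a by blast
  then obtain w \<sigma> where w: "y = to_fract w / to_fract \<sigma>" "\<sigma> \<notin> Q" unfolding loc_def by blast
  then have "to_fract (\<sigma> * b) = to_fract (a * w)"
    using notin_Q_nonzero[OF w(2)] a(2) by (simp add: y_def field_simps)
  then have "\<sigma> * (1 * b) = a * w" by (simp only: to_fract_eq_iff mult_1)
  then show ?thesis unfolding colon_ideal_def loc_multiples_def using w(2) by blast
qed

lemma local_uniformizer_exists: "\<exists>\<pi>\<in>Q. Q \<subseteq> loc_multiples \<pi>"
proof -
  obtain a where a: "a \<in> Q" "a \<noteq> 0" using Q_nonzero zero_in_Q by blast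
  define C where "C = colon_ideal (loc_multiples a)"
  have Cid: "ring_ideal (C b)" for b
    unfolding C_def by (rule ring_ideal_colon_ideal[OF ring_ideal_loc_multiples])
  have "1 \<notin> C 1"
  proof
    assume "1 \<in> C 1"
    then obtain s d where "s \<notin> Q" "s = a * d" by (auto simp: C_def colon_ideal_def loc_multiples_def)
    then show False using Q_mult_right[OF a(1), of d] by simp
  qed
  then obtain M where M: "M \<in> {C b | b. 1 \<notin> C b}" "\<forall>J\<in>{C b | b. 1 \<notin> C b}. M \<subseteq> J \<longrightarrow> J = M"
    using noetherian_maximal_element[OF noetherian, of "{C b | b. 1 \<notin> C b}" "C 1"] Cid by blast
  then obtain b where b: "M = C b" "1 \<notin> C b" by blast
  have "prime_ideal (C b)"
    using maximal_colon_ideal_prime[OF ring_ideal_loc_multiples, of a b] M b unfolding C_def by blast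
  moreover have "a \<in> C b"
    unfolding C_def colon_ideal_def using mult_in_loc_multiples by simp
  ultimately have "maximal_ideal (C b)"
    using nonzero_prime_maximal a(2) by blast
  moreover have "C b \<subseteq> Q"
  proof
    fix r assume "r \<in> C b"
    then obtain s d where h: "s \<notin> Q" "s * (r * b) = a * d"
      unfolding C_def colon_ideal_def loc_multiples_def by blast
    have "(s * r) * (1 * b) = a * d" using h(2) by (simp add: mult.assoc)
    then show "r \<in> Q"
      using b(2) notin_Q_mult[OF h(1)] unfolding C_def colon_ideal_def loc_multiples_def by blast
  qed
  ultimately have QC: "Q = C b"
    using Q_ring_ideal Q_ne_UNIV unfolding maximal_ideal_def by blast
  have "b \<noteq> 0"
    using b(2) mult_in_loc_multiples[of a 0] unfolding C_def colon_ideal_def by auto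
  show ?thesis
  proof (cases "\<exists>q s d. q \<in> Q \<and> s \<notin> Q \<and> s * (q * b) = a * d \<and> d \<notin> Q")
    case True
    then show ?thesis using uniformizer_of_unit_colon[OF QC[unfolded C_def] \<open>b \<noteq> 0\<close>] by blast
  next
    case False
    then show ?thesis using colon_without_unit_cofactor[OF a QC[unfolded C_def]] b(2) C_def by blast
  qed
qed

definition unif :: 'a where
  "unif = (SOME \<pi>. \<pi> \<in> Q \<and> Q \<subseteq> loc_multiples \<pi>)"

lemma unif_in_Q: "unif \<in> Q" and Q_subset_loc_multiples_unif: "Q \<subseteq> loc_multiples unif"
  using someI_ex[OF local_uniformizer_exists[unfolded Bex_def]] unfolding unif_def by blast+

lemma unif_divides: "q \<in> Q \<Longrightarrow> \<exists>s c. s \<notin> Q \<and> s * q = unif * c"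
  using Q_subset_loc_multiples_unif unfolding loc_multiples_def by blast

lemma unif_nonzero: "unif \<noteq> 0"
proof
  assume "unif = 0"
  obtain q where "q \<in> Q" "q \<noteq> 0" using Q_nonzero zero_in_Q by blast
  then obtain s c where "s \<notin> Q" "s * q = unif * c" using unif_divides by blast
  then show False using \<open>unif = 0\<close> \<open>q \<noteq> 0\<close> notin_Q_nonzero by simp
qed

lemma unif_power_in_Q: "n > 0 \<Longrightarrow> unif ^ n * c \<in> Q"
  using unif_in_Q by (cases n) (auto intro: Q_mult_right Q_mult_left simp: mult.assoc)

text \<open>The chain of ideals \<open>c\<^sub>n A\<^sub>Q \<inter> A\<close> would ascend strictly forever.\<close>

lemma unif_power_divisibility_bounded:
  assumes "a \<noteq> 0" shows "\<exists>n. a \<notin> loc_multiples (unif ^ n)"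
proof (rule ccontr)
  assume "\<not> ?thesis"
  then obtain s c where sc: "\<And>n. s n \<notin> Q" "\<And>n. s n * a = unif ^ n * c n"
    unfolding loc_multiples_def by simp metis
  define I where "I n = loc_multiples (c n)" for n
  have key: "s (Suc n) * c n = unif * s n * c (Suc n)" for n
  proof -
    have "unif ^ n * (s (Suc n) * c n) = s n * (s (Suc n) * a)"
      using sc(2)[of n] by (simp add: algebra_simps)
    also have "\<dots> = unif ^ n * (unif * s n * c (Suc n))"
      using sc(2)[of "Suc n"] by (simp add: algebra_simps)
    finally show ?thesis using unif_nonzero by simp
  qed
  have "I n \<subseteq> I (Suc n)" for n
  proof
    fix x assume "x \<in> I n"
    then obtain \<sigma> d where h: "\<sigma> \<notin> Q" "\<sigma> * x = c n * d" unfolding I_def loc_multiples_def by blast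
    have "(s (Suc n) * \<sigma>) * x = c (Suc n) * (unif * s n * d)"
      using h(2) key[of n] by (metis mult.assoc mult.commute)
    then show "x \<in> I (Suc n)" unfolding I_def loc_multiples_def using notin_Q_mult[OF sc(1) h(1)] by blast
  qed
  then obtain N where N: "I (Suc N) \<subseteq> I N"
    using noetherian_ascending_chain[OF noetherian, of I] ring_ideal_loc_multiples unfolding I_def by blast
  have "c (Suc N) \<in> I N"
    using N mult_in_loc_multiples[of "c (Suc N)" 1] unfolding I_def by auto
  then obtain \<sigma> d where h: "\<sigma> \<notin> Q" "\<sigma> * c (Suc N) = c N * d" unfolding I_def loc_multiples_def by blast
  have cN: "c N \<noteq> 0" using sc(2)[of N] sc(1)[of N] notin_Q_nonzero assms by auto
  have "c N * (\<sigma> * s (Suc N)) = unif * s N * (\<sigma> * c (Suc N))"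
    using key[of N] by (simp add: algebra_simps)
  also have "\<dots> = c N * (unif * (s N * d))" using h(2) by (simp add: algebra_simps)
  finally have "\<sigma> * s (Suc N) = unif * (s N * d)" using cN by simp
  moreover have "unif * (s N * d) \<in> Q" using unif_in_Q Q_mult_right by blast
  ultimately show False using notin_Q_mult[OF h(1) sc(1)[of "Suc N"]] by simp
qed

lemma unif_power_factorization:
  assumes "a \<noteq> 0" shows "\<exists>n s t. s \<notin> Q \<and> t \<notin> Q \<and> s * a = unif ^ n * t"
proof -
  obtain m where "a \<notin> loc_multiples (unif ^ m)" using unif_power_divisibility_bounded[OF assms] by blast
  moreover have a0: "a \<in> loc_multiples (unif ^ 0)" using mult_in_loc_multiples[of 1 a] by simp
  ultimately obtain n where n: "n \<le> m" "\<forall>i<n. a \<in> loc_multiples (unif ^ i)" "a \<notin> loc_multiples (unif ^ n)"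
    using ex_least_nat_le[of "\<lambda>n. a \<notin> loc_multiples (unif ^ n)" m] by blast
  then obtain k where k: "n = Suc k" using a0 by (cases n) auto
  then obtain s c where sc: "s \<notin> Q" "s * a = unif ^ k * c"
    using n(2) unfolding loc_multiples_def by blast
  have "c \<notin> Q"
  proof
    assume "c \<in> Q"
    then obtain s' c' where h: "s' \<notin> Q" "s' * c = unif * c'" using unif_divides by blast
    have "(s' * s) * a = unif ^ Suc k * c'" using sc(2) h(2) by (metis mult.assoc mult.commute power_Suc)
    then show False using n(3) notin_Q_mult[OF h(1) sc(1)] unfolding k loc_multiples_def by blast
  qed
  then show ?thesis using sc by blast
qed

lemma prod_Q_unif_power: "(\<forall>i<n. x i \<in> Q) \<Longrightarrow> \<exists>\<sigma> d. \<sigma> \<notin> Q \<and> \<sigma> * (\<Prod>i<n. x i) = unif ^ n * d"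
proof (induction n)
  case 0 then show ?case by (intro exI[of _ 1]) (simp add: one_notin_Q)
next
  case (Suc n)
  then obtain \<sigma> d where h: "\<sigma> \<notin> Q" "\<sigma> * (\<Prod>i<n. x i) = unif ^ n * d" by auto
  obtain \<sigma>' c' where h': "\<sigma>' \<notin> Q" "\<sigma>' * x n = unif * c'" using unif_divides Suc.prems by blast
  have "(\<sigma> * \<sigma>') * (\<Prod>i<Suc n. x i) = (\<sigma> * (\<Prod>i<n. x i)) * (\<sigma>' * x n)" by (simp add: algebra_simps)
  also have "\<dots> = unif ^ Suc n * (d * c')" using h(2) h'(2) by (simp add: algebra_simps)
  finally show ?case using notin_Q_mult[OF h(1) h'(1)] by blast
qed

lemma ideal_pow_subset_loc_multiples: "ideal_pow Q n \<subseteq> loc_multiples (unif ^ n)"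
  unfolding ideal_pow_def
proof (rule ideal_span_least[OF ring_ideal_loc_multiples])
  show "{\<Prod>i<n. x i | x. \<forall>i<n. x i \<in> Q} \<subseteq> loc_multiples (unif ^ n)"
    using prod_Q_unif_power unfolding loc_multiples_def by blast
qed

lemma unif_power_in_ideal_pow: "unif ^ n * t \<in> ideal_pow Q n"
proof -
  have "unif ^ n \<in> {(\<Prod>i<n. x i) | x. \<forall>i<n. x i \<in> Q}"
    by (intro CollectI exI[of _ "\<lambda>_. unif"]) (simp add: unif_in_Q)
  then have "unif ^ n \<in> ideal_pow Q n" unfolding ideal_pow_def by (rule ideal_span_base)
  then show ?thesis unfolding ideal_pow_def by (rule ring_ideal_mult_right[OF ring_ideal_ideal_span])
qed

lemma val_at_eq: assumes "s \<notin> Q" "t \<notin> Q" "s * a = unif ^ n * t" shows "val_at Q a = n"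
  unfolding val_at_def
proof (rule Greatest_equality)
  show "\<exists>s. s \<notin> Q \<and> s * a \<in> ideal_pow Q n" using assms unif_power_in_ideal_pow by metis
next
  fix m assume "\<exists>s. s \<notin> Q \<and> s * a \<in> ideal_pow Q m"
  then obtain s' where s': "s' \<notin> Q" "s' * a \<in> ideal_pow Q m" by blast
  obtain \<sigma> d where h: "\<sigma> \<notin> Q" "\<sigma> * (s' * a) = unif ^ m * d" using ideal_pow_subset_loc_multiples s'(2) unfolding loc_multiples_def by blast
  show "m \<le> n"
  proof (rule ccontr)
    assume "\<not> m \<le> n"
    then have mn: "m = n + (m - n)" "m - n > 0" by auto
    have "unif ^ n * (\<sigma> * s' * t) = \<sigma> * s' * (s * a)" using assms(3) by (simp add: algebra_simps)
    also have "\<dots> = s * (\<sigma> * (s' * a))" by (simp add: algebra_simps)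
    also have "\<dots> = unif ^ n * (unif ^ (m - n) * (s * d))" using h(2) mn(1)
      by (metis mult.assoc mult.left_commute power_add)
    finally have "\<sigma> * s' * t = unif ^ (m - n) * (s * d)" using unif_nonzero by simp
    moreover have "unif ^ (m - n) * (s * d) \<in> Q" using unif_power_in_Q mn(2) by blast
    ultimately show False using notin_Q_mult[OF notin_Q_mult[OF h(1) s'(1)] assms(2)] by simp
  qed
qed

lemma unif_power_cancel: assumes "e \<notin> Q" "f \<notin> Q" "unif ^ i * e = unif ^ j * f" shows "i = j"
proof (rule ccontr)
  assume "i \<noteq> j"
  then consider "i < j" | "j < i" by linarith
  then show False
  proof cases
    case 1
    then have "unif ^ i * e = unif ^ i * (unif ^ (j - i) * f)" using assms(3)
      by (metis le_add_diff_inverse less_imp_le mult.assoc power_add)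
    then have "e = unif ^ (j - i) * f" using unif_nonzero by simp
    then show False using unif_power_in_Q[of "j - i" f] 1 assms(1) by simp
  next
    case 2
    then have "unif ^ j * f = unif ^ j * (unif ^ (i - j) * e)" using assms(3)
      by (metis le_add_diff_inverse less_imp_le mult.assoc power_add)
    then have "f = unif ^ (i - j) * e" using unif_nonzero by simp
    then show False using unif_power_in_Q[of "i - j" e] 2 assms(2) by simp
  qed
qed

lemma ord_unif_power_quotient:
  assumes "u \<notin> Q" "w \<notin> Q" "g = to_fract (unif ^ i * u) / to_fract (unif ^ j * w)"
  shows "ord_at Q g = int i - int j"
  unfolding ord_at_def
proof (rule the_equality)
  have "unif ^ i * u \<noteq> 0" "unif ^ j * w \<noteq> 0" using unif_nonzero notin_Q_nonzero assms by auto
  moreover have "val_at Q (unif ^ i * u) = i" by (rule val_at_eq[of 1 u]) (auto simp: one_notin_Q assms)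
  moreover have "val_at Q (unif ^ j * w) = j" by (rule val_at_eq[of 1 w]) (auto simp: one_notin_Q assms)
  ultimately show "\<exists>a b. a \<noteq> 0 \<and> b \<noteq> 0 \<and> g = Fract a b \<and> int i - int j = int (val_at Q a) - int (val_at Q b)"
    using assms(3) by (intro exI[of _ "unif ^ i * u"] exI[of _ "unif ^ j * w"]) (simp add: Fract_conv_to_fract)
next
  fix k assume "\<exists>a b. a \<noteq> 0 \<and> b \<noteq> 0 \<and> g = Fract a b \<and> k = int (val_at Q a) - int (val_at Q b)"
  then obtain a b where ab: "a \<noteq> 0" "b \<noteq> 0" "g = Fract a b" "k = int (val_at Q a) - int (val_at Q b)" by blast
  obtain n s t where a1: "s \<notin> Q" "t \<notin> Q" "s * a = unif ^ n * t" using unif_power_factorization[OF ab(1)] by blast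
  obtain m s' t' where b1: "s' \<notin> Q" "t' \<notin> Q" "s' * b = unif ^ m * t'" using unif_power_factorization[OF ab(2)] by blast
  have va: "val_at Q a = n" using val_at_eq a1 by blast
  have vb: "val_at Q b = m" using val_at_eq b1 by blast
  have "to_fract (unif ^ i * u) / to_fract (unif ^ j * w) = to_fract a / to_fract b"
    using assms(3) ab(3) by (simp add: Fract_conv_to_fract)
  then have "to_fract (unif ^ i * u) * to_fract b = to_fract a * to_fract (unif ^ j * w)"
    using ab(1,2) unif_nonzero notin_Q_nonzero[OF assms(2)] by (simp add: field_simps)
  then have e1: "(unif ^ i * u) * b = a * (unif ^ j * w)" by (simp only: to_fract_mult[symmetric] to_fract_eq_iff)
  have "unif ^ (i + m) * (u * s * t') = (unif ^ i * u) * (s' * b) * s" using b1(3) by (simp add: algebra_simps power_add)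
  also have "\<dots> = s' * (unif ^ j * w) * (s * a)" using e1 by (simp add: algebra_simps)
  also have "\<dots> = unif ^ (j + n) * (s' * w * t)" using a1(3) by (simp add: algebra_simps power_add)
  finally have calc: "unif ^ (i + m) * (u * s * t') = unif ^ (j + n) * (s' * w * t)" .
  have n1: "u * s * t' \<notin> Q" using notin_Q_mult assms(1) a1(1) b1(2) by blast
  have n2: "s' * w * t \<notin> Q" using notin_Q_mult assms(2) a1(2) b1(1) by blast
  have "i + m = j + n" using unif_power_cancel[OF n1 n2 calc] .
  then show "k = int i - int j" using ab(4) va vb by simp
qed

lemma unif_power_quotient_exists:
  assumes "g \<noteq> 0" shows "\<exists>i j u w. u \<notin> Q \<and> w \<notin> Q \<and> g = to_fract (unif ^ i * u) / to_fract (unif ^ j * w)"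
proof -
  obtain a b where ab: "g = Fract a b" "b \<noteq> 0" "a \<noteq> 0" using assms by (cases g rule: Fract_cases_nonzero) auto
  obtain n s t where a1: "s \<notin> Q" "t \<notin> Q" "s * a = unif ^ n * t" using unif_power_factorization[OF ab(3)] by blast
  obtain m s' t' where b1: "s' \<notin> Q" "t' \<notin> Q" "s' * b = unif ^ m * t'" using unif_power_factorization[OF ab(2)] by blast
  have ea: "to_fract a = to_fract (unif ^ n * t) / to_fract s"
  proof -
    have "to_fract s * to_fract a = to_fract (unif ^ n * t)" using arg_cong[OF a1(3), of to_fract] by simp
    then show ?thesis using notin_Q_nonzero[OF a1(1)] by (simp add: field_simps)
  qed
  have eb: "to_fract b = to_fract (unif ^ m * t') / to_fract s'"
  proof -
    have "to_fract s' * to_fract b = to_fract (unif ^ m * t')" using arg_cong[OF b1(3), of to_fract] by simp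
    then show ?thesis using notin_Q_nonzero[OF b1(1)] by (simp add: field_simps)
  qed
  have nz: "to_fract s \<noteq> 0" "to_fract s' \<noteq> 0" "to_fract (unif ^ m * t') \<noteq> 0"
    using notin_Q_nonzero a1 b1 unif_nonzero by auto
  have "g = to_fract (unif ^ n * (t * s')) / to_fract (unif ^ m * (t' * s))"
    unfolding ab(1) Fract_conv_to_fract ea eb using nz by (simp add: field_simps)
  then show ?thesis using notin_Q_mult a1 b1 by blast
qed

lemma ord_mult: assumes "g \<noteq> 0" "h \<noteq> 0" shows "ord_at Q (g * h) = ord_at Q g + ord_at Q h"
proof -
  obtain i j u w where g: "u \<notin> Q" "w \<notin> Q" "g = to_fract (unif ^ i * u) / to_fract (unif ^ j * w)"
    using unif_power_quotient_exists[OF assms(1)] by blast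
  obtain i' j' u' w' where h: "u' \<notin> Q" "w' \<notin> Q" "h = to_fract (unif ^ i' * u') / to_fract (unif ^ j' * w')"
    using unif_power_quotient_exists[OF assms(2)] by blast
  have "g * h = to_fract (unif ^ (i + i') * (u * u')) / to_fract (unif ^ (j + j') * (w * w'))"
    using g h by (simp add: power_add algebra_simps)
  then have "ord_at Q (g * h) = int (i + i') - int (j + j')"
    using ord_unif_power_quotient notin_Q_mult g h by blast
  then show ?thesis using ord_unif_power_quotient[OF g] ord_unif_power_quotient[OF h] by simp
qed

lemma ord_one: "ord_at Q 1 = 0"
  using ord_unif_power_quotient[of 1 1 1 0 0] one_notin_Q by simp

lemma ord_inverse: assumes "g \<noteq> 0" shows "ord_at Q (inverse g) = - ord_at Q g"
  using ord_mult[of g "inverse g"] assms ord_one by simp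

lemma ord_divide: assumes "g \<noteq> 0" "h \<noteq> 0" shows "ord_at Q (g / h) = ord_at Q g - ord_at Q h"
  using ord_mult[of g "inverse h"] ord_inverse[of h] assms by (simp add: divide_inverse)

lemma ord_power: "g \<noteq> 0 \<Longrightarrow> ord_at Q (g ^ k) = int k * ord_at Q g"
  by (induction k) (simp_all add: ord_one ord_mult algebra_simps)

lemma ord_to_fract:
  assumes "a \<noteq> 0" shows "ord_at Q (to_fract a) \<ge> 0" "a \<notin> Q \<Longrightarrow> ord_at Q (to_fract a) = 0"
    "a \<in> Q \<Longrightarrow> ord_at Q (to_fract a) \<ge> 1"
proof -
  obtain n s t where a1: "s \<notin> Q" "t \<notin> Q" "s * a = unif ^ n * t" using unif_power_factorization[OF assms] by blast
  have "to_fract a = to_fract (unif ^ n * t) / to_fract (unif ^ 0 * s)"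
    using a1 notin_Q_nonzero[OF a1(1)] by (simp add: field_simps flip: to_fract_mult)
  then have o: "ord_at Q (to_fract a) = int n" using ord_unif_power_quotient a1 by fastforce
  then show "ord_at Q (to_fract a) \<ge> 0" by simp
  show "a \<notin> Q \<Longrightarrow> ord_at Q (to_fract a) = 0"
  proof -
    assume "a \<notin> Q"
    have "n = 0"
    proof (rule ccontr)
      assume "n \<noteq> 0"
      then have "s * a \<in> Q" using a1(3) unif_power_in_Q by simp
      then show False using notin_Q_mult[OF a1(1) \<open>a \<notin> Q\<close>] by blast
    qed
    then show ?thesis using o by simp
  qed
  show "a \<in> Q \<Longrightarrow> ord_at Q (to_fract a) \<ge> 1"
  proof -
    assume "a \<in> Q"
    have "n \<noteq> 0"
    proof
      assume "n = 0"
      then have "s * a = t" using a1(3) by simp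
      then show False using Q_mult_left[OF \<open>a \<in> Q\<close>, of s] a1(2) by simp
    qed
    then show ?thesis using o by simp
  qed
qed

lemma ord_unif: "ord_at Q (to_fract unif) = 1"
  using ord_unif_power_quotient[of 1 1 "to_fract unif" 1 0] one_notin_Q by simp

lemma ord_unif_power_quotient_ge:
  assumes "z \<noteq> 0" "w \<notin> Q" "g = to_fract (unif ^ i * z) / to_fract (unif ^ j * w)"
  shows "ord_at Q g \<ge> int i - int j"
proof -
  obtain n s t where a1: "s \<notin> Q" "t \<notin> Q" "s * z = unif ^ n * t" using unif_power_factorization[OF assms(1)] by blast
  have "g = to_fract (unif ^ (i + n) * t) / to_fract (unif ^ j * (w * s))"
  proof -
    have "to_fract (s * z) = to_fract (unif ^ n * t)" using a1 by simp
    then show ?thesis unfolding assms(3) using notin_Q_nonzero[OF a1(1)] notin_Q_nonzero[OF assms(2)] unif_nonzero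
      by (simp add: field_simps power_add)
  qed
  then have "ord_at Q g = int (i + n) - int j" using ord_unif_power_quotient a1 notin_Q_mult assms(2) by blast
  then show ?thesis by simp
qed

lemma ord_add:
  assumes "g \<noteq> 0" "h \<noteq> 0" "g + h \<noteq> 0"
  shows "ord_at Q (g + h) \<ge> min (ord_at Q g) (ord_at Q h)"
proof -
  obtain i j u w where g: "u \<notin> Q" "w \<notin> Q" "g = to_fract (unif ^ i * u) / to_fract (unif ^ j * w)"
    using unif_power_quotient_exists[OF assms(1)] by blast
  obtain i' j' u' w' where h: "u' \<notin> Q" "w' \<notin> Q" "h = to_fract (unif ^ i' * u') / to_fract (unif ^ j' * w')"
    using unif_power_quotient_exists[OF assms(2)] by blast
  have og: "ord_at Q g = int i - int j" using ord_unif_power_quotient[OF g] .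
  have oh: "ord_at Q h = int i' - int j'" using ord_unif_power_quotient[OF h] .
  have wnz: "w \<noteq> 0" "w' \<noteq> 0" using notin_Q_nonzero g h by auto
  have ww: "w * w' \<notin> Q" using notin_Q_mult g h by blast
  have base: "g + h = to_fract (unif ^ (i + j') * (u * w') + unif ^ (i' + j) * (u' * w)) / to_fract (unif ^ (j + j') * (w * w'))"
    unfolding g(3) h(3) using wnz unif_nonzero by (simp add: field_simps power_add)
  show ?thesis
  proof (cases "i + j' \<le> i' + j")
    case True
    define z where "z = u * w' + unif ^ (i' + j - (i + j')) * (u' * w)"
    have "unif ^ (i + j') * (u * w') + unif ^ (i' + j) * (u' * w) = unif ^ (i + j') * z"
      unfolding z_def using True by (simp add: algebra_simps flip: power_add)
    then have e: "g + h = to_fract (unif ^ (i + j') * z) / to_fract (unif ^ (j + j') * (w * w'))"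
      using base by simp
    have "z \<noteq> 0" using e assms(3) by auto
    then have "ord_at Q (g + h) \<ge> int (i + j') - int (j + j')" using ord_unif_power_quotient_ge[OF _ ww e] by blast
    then show ?thesis using og by simp
  next
    case False
    define z where "z = unif ^ (i + j' - (i' + j)) * (u * w') + u' * w"
    have "unif ^ (i + j') * (u * w') + unif ^ (i' + j) * (u' * w) = unif ^ (i' + j) * z"
      unfolding z_def using False by (simp add: algebra_simps flip: power_add)
    then have e: "g + h = to_fract (unif ^ (i' + j) * z) / to_fract (unif ^ (j + j') * (w * w'))"
      using base by simp
    have "z \<noteq> 0" using e assms(3) by auto
    then have "ord_at Q (g + h) \<ge> int (i' + j) - int (j + j')" using ord_unif_power_quotient_ge[OF _ ww e] by blast
    then show ?thesis using oh by simp
  qed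
qed

end

section \<open>Prime divisors and approximation\<close>

lemma prod_lessThan_add:
  "(\<Prod>i<k+l. f i) = (\<Prod>i<k. f i) * (\<Prod>i<l. f (k + i))" for f :: "nat \<Rightarrow> 'a::comm_monoid_mult"
proof -
  have "(\<Prod>i<k+l. f i) = (\<Prod>i<k. f i) * (\<Prod>i=k..<k+l. f i)"
    by (simp add: lessThan_atLeast0 prod.atLeastLessThan_concat)
  also have "(\<Prod>i=k..<k+l. f i) = (\<Prod>i=0..<l. f (i + k))"
    using prod.shift_bounds_nat_ivl[of f 0 k l] by (simp add: add.commute)
  finally show ?thesis by (simp add: lessThan_atLeast0 add.commute)
qed

lemma prime_ideal_zero: "prime_ideal ({0} :: 'a::idom set)"
proof -
  have "{0::'a} \<noteq> UNIV" by (metis UNIV_I singletonD zero_neq_one)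
  then show ?thesis unfolding prime_ideal_def ring_ideal_def by auto
qed

lemma power_notin_prime_ideal: "prime_ideal P \<Longrightarrow> p \<notin> P \<Longrightarrow> p ^ k \<notin> P"
  by (induction k) (auto simp: prime_ideal_def dest: ring_ideal_one_imp_UNIV)

lemma prod_notin_prime_ideal:
  assumes "prime_ideal P" "\<forall>i<(n::nat). x i \<notin> P" shows "(\<Prod>i<n. x i) \<notin> P"
  using assms(2)
proof (induction n)
  case 0
  then show ?case using assms(1) ring_ideal_one_imp_UNIV unfolding prime_ideal_def by auto
next
  case (Suc n)
  then show ?case using assms(1) unfolding prime_ideal_def by auto
qed

lemma A_submodule_local_global:
  assumes "noetherian_ring TYPE('a::idom)" and M: "A_submodule M"
    and local: "\<And>P::'a set. maximal_ideal P \<Longrightarrow> \<exists>x. x \<notin> P \<and> to_fract x * g \<in> M"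
  shows "g \<in> M"
proof -
  define J where "J = {x. to_fract x * g \<in> M}"
  have J: "ring_ideal J" unfolding J_def by (rule ring_ideal_denominators[OF M])
  have "1 \<in> J"
  proof (rule ccontr)
    assume "1 \<notin> J"
    then obtain P where "maximal_ideal P" "J \<subseteq> P" using exists_maximal_ideal[OF assms(1) J] by blast
    then show False using local unfolding J_def by blast
  qed
  then show ?thesis unfolding J_def by simp
qed

context dedekind begin

lemma prime_divisor_not_subset:
  assumes "prime_divisor (P::'a set)" "prime_divisor Q" "P \<noteq> Q" shows "\<not> P \<subseteq> Q"
  using nonzero_prime_maximal assms unfolding prime_divisor_def prime_ideal_def maximal_ideal_def by blast

lemma maximal_ideal_cases:
  assumes "maximal_ideal (P::'a set)" shows "P = {0} \<or> prime_divisor P"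
  using maximal_ideal_imp_prime[OF assms] by (auto simp: prime_divisor_def)

definition contains_prime_product :: "'a set \<Rightarrow> bool" where
  "contains_prime_product I \<longleftrightarrow> (\<exists>Ps. (\<forall>P\<in>set Ps. prime_divisor P) \<and>
     (\<forall>x. (\<forall>i<length Ps. x i \<in> Ps ! i) \<longrightarrow> (\<Prod>i<length Ps. x i) \<in> I))"

lemma contains_prime_product_mult:
  assumes "contains_prime_product I" "contains_prime_product J" "\<And>u v. u \<in> I \<Longrightarrow> v \<in> J \<Longrightarrow> u * v \<in> M"
  shows "contains_prime_product M"
proof -
  obtain Ps1 where P1: "\<forall>P\<in>set Ps1. prime_divisor P"
    "\<And>z. (\<forall>i<length Ps1. z i \<in> Ps1 ! i) \<Longrightarrow> (\<Prod>i<length Ps1. z i) \<in> I"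
    using assms(1) unfolding contains_prime_product_def by blast
  obtain Ps2 where P2: "\<forall>P\<in>set Ps2. prime_divisor P"
    "\<And>z. (\<forall>i<length Ps2. z i \<in> Ps2 ! i) \<Longrightarrow> (\<Prod>i<length Ps2. z i) \<in> J"
    using assms(2) unfolding contains_prime_product_def by blast
  have "(\<Prod>i<length (Ps1 @ Ps2). z i) \<in> M" if z: "\<forall>i<length (Ps1 @ Ps2). z i \<in> (Ps1 @ Ps2) ! i" for z
  proof -
    have "(\<Prod>i<length Ps1. z i) \<in> I"
    proof (intro P1(2) allI impI)
      fix i assume "i < length Ps1"
      then show "z i \<in> Ps1 ! i" using z[rule_format, of i] by (simp add: nth_append)
    qed
    moreover have "(\<Prod>i<length Ps2. z (length Ps1 + i)) \<in> J"
    proof (intro P2(2) allI impI)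
      fix i assume "i < length Ps2"
      then show "z (length Ps1 + i) \<in> Ps2 ! i" using z[rule_format, of "length Ps1 + i"] by (simp add: nth_append)
    qed
    ultimately show ?thesis
      using assms(3) prod_lessThan_add[of z "length Ps1" "length Ps2"] by simp
  qed
  then show ?thesis
    unfolding contains_prime_product_def using P1(1) P2(1) by (intro exI[of _ "Ps1 @ Ps2"]) auto
qed

lemma nonzero_ideal_contains_prime_product:
  assumes "ring_ideal I" "I \<noteq> {0}" shows "contains_prime_product I"
proof (rule ccontr)
  assume "\<not> contains_prime_product I"
  define F where "F = {J. ring_ideal J \<and> J \<noteq> {0} \<and> \<not> contains_prime_product J}"
  obtain M where M: "M \<in> F" "\<forall>J\<in>F. M \<subseteq> J \<longrightarrow> J = M"
    using noetherian_maximal_element[OF noetherian, of F I] assms \<open>\<not> contains_prime_product I\<close>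
    unfolding F_def by blast
  have Mid: "ring_ideal M" and Mnz: "M \<noteq> {0}" and Mc: "\<not> contains_prime_product M"
    using M(1) F_def by auto
  have "\<not> prime_divisor M"
  proof
    assume "prime_divisor M"
    then have "contains_prime_product M"
      unfolding contains_prime_product_def by (intro exI[of _ "[M]"]) auto
    then show False using Mc by blast
  qed
  moreover have "M \<noteq> UNIV"
  proof
    assume "M = UNIV"
    then have "contains_prime_product M"
      unfolding contains_prime_product_def by (intro exI[of _ "[]"]) auto
    then show False using Mc by blast
  qed
  ultimately obtain x y where xy: "x * y \<in> M" "x \<notin> M" "y \<notin> M"
    using Mid Mnz unfolding prime_divisor_def prime_ideal_def by blast
  have adjoin: "contains_prime_product {m + r * z | m r. m \<in> M}" if "z \<notin> M" for z
  proof (rule ccontr)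
    assume "\<not> ?thesis"
    then have "{m + r * z | m r. m \<in> M} \<in> F"
      using ring_ideal_adjoin[OF Mid, of z] Mnz ring_ideal_0[OF Mid] unfolding F_def by blast
    then show False using M(2) ring_ideal_adjoin[OF Mid, of z] that by blast
  qed
  have "u * v \<in> M" if uv_in: "u \<in> {m + r * x | m r. m \<in> M}" "v \<in> {m + r * y | m r. m \<in> M}" for u v
  proof -
    obtain m r m' r' where uv: "u = m + r * x" "v = m' + r' * y" "m \<in> M" "m' \<in> M"
      using uv_in by blast
    have "u * v = m * v + (r * x) * m' + (r * r') * (x * y)"
      unfolding uv(1,2) by (simp add: algebra_simps)
    then show ?thesis
      using uv(3,4) xy(1) Mid by (simp add: ring_ideal_add ring_ideal_mult_left ring_ideal_mult_right)
  qed
  then have "contains_prime_product M"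
    using contains_prime_product_mult[OF adjoin[OF xy(2)] adjoin[OF xy(3)]] by blast
  then show False using Mc by blast
qed

lemma finite_primes_containing:
  assumes "(a::'a) \<noteq> 0" shows "finite {P. prime_divisor P \<and> a \<in> P}"
proof -
  have "range (\<lambda>r. a * r) \<noteq> {0}" using assms rangeI[of "\<lambda>r. a * r" 1] by auto
  then obtain Ps where Ps: "\<forall>P\<in>set Ps. prime_divisor P"
    "\<And>z. \<forall>i<length Ps. z i \<in> Ps ! i \<Longrightarrow> (\<Prod>i<length Ps. z i) \<in> range (\<lambda>r. a * r)"
    using nonzero_ideal_contains_prime_product[OF ring_ideal_principal] unfolding contains_prime_product_def by blast
  have "Q \<in> set Ps" if Q: "prime_divisor Q" "a \<in> Q" for Q
  proof (rule ccontr)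
    assume "Q \<notin> set Ps"
    then have "\<forall>i<length Ps. \<exists>p\<in>Ps ! i. p \<notin> Q"
      using prime_divisor_not_subset Ps(1) Q(1) nth_mem by blast
    then obtain z where z: "\<forall>i<length Ps. z i \<in> Ps ! i \<and> z i \<notin> Q" by metis
    then obtain r where "(\<Prod>i<length Ps. z i) = a * r" using Ps(2)[of z] by blast
    moreover have "a * r \<in> Q"
      using Q ring_ideal_mult_right unfolding prime_divisor_def prime_ideal_def by blast
    moreover have "(\<Prod>i<length Ps. z i) \<notin> Q"
      using prod_notin_prime_ideal[of Q "length Ps" z] z Q(1) by (simp add: prime_divisor_def)
    ultimately show False by simp
  qed
  then have "{P. prime_divisor P \<and> a \<in> P} \<subseteq> set Ps" by blast
  then show ?thesis using finite_subset by blast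
qed

lemma dedekind_prime_at: "prime_divisor P \<Longrightarrow> dedekind_prime T P"
  by (simp add: dedekind_prime_def dedekind_prime_axioms_def dedekind_axioms)

lemmas ord_at_mult = dedekind_prime.ord_mult[OF dedekind_prime_at]
lemmas ord_at_divide = dedekind_prime.ord_divide[OF dedekind_prime_at]
lemmas ord_at_add = dedekind_prime.ord_add[OF dedekind_prime_at]
lemmas ord_at_power = dedekind_prime.ord_power[OF dedekind_prime_at]
lemmas ord_at_to_fract = dedekind_prime.ord_to_fract[OF dedekind_prime_at]

lemma finite_ord_at_support:
  assumes "(g::'a fract) \<noteq> 0" shows "finite {P. prime_divisor P \<and> ord_at P g \<noteq> 0}"
proof -
  obtain a b where ab: "g = Fract a b" "b \<noteq> 0" "a \<noteq> 0"
    using assms by (cases g rule: Fract_cases_nonzero) auto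
  have "{P. prime_divisor P \<and> ord_at P g \<noteq> 0} \<subseteq> {P. prime_divisor P \<and> a \<in> P} \<union> {P. prime_divisor P \<and> b \<in> P}"
  proof
    fix P assume "P \<in> {P. prime_divisor P \<and> ord_at P g \<noteq> 0}"
    then have P: "prime_divisor P" "ord_at P g \<noteq> 0" by auto
    have "ord_at P g = ord_at P (to_fract a) - ord_at P (to_fract b)"
      using ord_at_divide[OF P(1)] ab by (simp add: Fract_conv_to_fract)
    then have "a \<in> P \<or> b \<in> P" using ord_at_to_fract(2)[OF P(1)] ab P(2) by force
    then show "P \<in> {P. prime_divisor P \<and> a \<in> P} \<union> {P. prime_divisor P \<and> b \<in> P}" using P(1) by blast
  qed
  then show ?thesis using finite_primes_containing ab by (meson finite_UnI finite_subset)
qed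

lemma A_submodule_integral: "A_submodule (range to_fract :: 'a fract set)"
  unfolding A_submodule_def by (auto simp flip: to_fract_add to_fract_mult)

lemma ord_at_nonneg_imp_integral:
  assumes "\<forall>P. prime_divisor P \<longrightarrow> ord_at P (g::'a fract) \<ge> 0" shows "g \<in> range to_fract"
proof (rule A_submodule_local_global[OF noetherian A_submodule_integral])
  fix M :: "'a set" assume M: "maximal_ideal M"
  show "\<exists>x. x \<notin> M \<and> to_fract x * g \<in> range to_fract"
  proof (cases "M = {0} \<or> g = 0")
    case True
    obtain a b where ab: "g = Fract a b" "b \<noteq> 0" using Fract_cases by blast
    then have "to_fract b * g = to_fract a \<and> to_fract 1 * g = g" by (simp add: Fract_conv_to_fract)
    then show ?thesis using True ab(2) M by (auto simp: maximal_ideal_def)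
  next
    case False
    then have pM: "prime_divisor M" using maximal_ideal_cases[OF M] by blast
    interpret dedekind_prime T M using pM by unfold_locales
    obtain i j u w where g: "u \<notin> M" "w \<notin> M" "g = to_fract (unif ^ i * u) / to_fract (unif ^ j * w)"
      using unif_power_quotient_exists False by blast
    have "int i - int j \<ge> 0" using ord_unif_power_quotient[OF g] assms pM by metis
    then have ij: "i = j + (i - j)" by simp
    have "to_fract w * g = to_fract (unif ^ (i - j) * u)"
      unfolding g(3) using notin_Q_nonzero[OF g(2)] unif_nonzero
      by (subst ij) (simp add: power_add field_simps)
    then show ?thesis using g(2) by (metis rangeI)
  qed
qed

lemma approximation:
  assumes "finite F" "\<And>P. P \<in> F \<Longrightarrow> prime_divisor P \<and> \<not> P \<subseteq> Q" "prime_ideal (Q::'a set)"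
  shows "\<exists>x. x \<notin> Q \<and> (\<forall>P\<in>F. ord_at P (to_fract x) \<ge> int (n P))"
  using assms(1,2)
proof (induction F rule: finite_induct)
  case empty
  have "(1::'a) \<notin> Q" using assms(3) ring_ideal_one_imp_UNIV by (auto simp: prime_ideal_def)
  then show ?case by blast
next
  case (insert P F)
  then obtain x where x: "x \<notin> Q" "\<forall>P\<in>F. ord_at P (to_fract x) \<ge> int (n P)" by auto
  obtain p where p: "p \<in> P" "p \<notin> Q" using insert.prems by blast
  have "0 \<in> Q" using assms(3) ring_ideal_0 by (auto simp: prime_ideal_def)
  then have nz: "p \<noteq> 0" "x \<noteq> 0" using p(2) x(1) by auto
  define x' where "x' = x * p ^ n P"
  have "x' \<notin> Q"
    unfolding x'_def using x(1) power_notin_prime_ideal[OF assms(3) p(2)] assms(3)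
    by (auto simp: prime_ideal_def)
  moreover have "ord_at P' (to_fract x') \<ge> int (n P')" if "P' \<in> insert P F" for P'
  proof -
    have pd: "prime_divisor P'" using that insert.prems by auto
    have e: "ord_at P' (to_fract x') = ord_at P' (to_fract x) + int (n P) * ord_at P' (to_fract p)"
      unfolding x'_def using ord_at_mult[OF pd] ord_at_power[OF pd] nz by simp
    have o1: "ord_at P' (to_fract x) \<ge> 0" "ord_at P' (to_fract p) \<ge> 0"
      using ord_at_to_fract(1)[OF pd] nz by auto
    show ?thesis
    proof (cases "P' = P")
      case True
      then have "ord_at P' (to_fract p) \<ge> 1" using ord_at_to_fract(3)[OF pd] nz p(1) by auto
      then have "int (n P) * ord_at P' (to_fract p) \<ge> int (n P)"
        by (metis mult.right_neutral mult_left_mono of_nat_0_le_iff)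
      then show ?thesis using e o1 unfolding True by linarith
    next
      case False
      then have "ord_at P' (to_fract x) \<ge> int (n P')" using that x(2) by blast
      then show ?thesis using e o1 by (simp add: add_increasing2)
    qed
  qed
  ultimately show ?case by blast
qed

section \<open>Sections of integral divisors\<close>

definition sections :: "('a set \<Rightarrow> int) \<Rightarrow> 'a fract set" where
  "sections E = {g. g \<noteq> 0 \<and> (\<forall>P. prime_divisor P \<longrightarrow> ord_at P g + E P \<ge> 0)} \<union> {0}"

definition int_divisor :: "('a set \<Rightarrow> int) \<Rightarrow> bool" where
  "int_divisor E \<longleftrightarrow> finite {P. prime_divisor P \<and> E P \<noteq> 0}"

lemma H0_eq_sections: "H0 D = sections (\<lambda>P. \<lfloor>D P\<rfloor>)"
  unfolding H0_def sections_def ..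

lemma sections_0: "0 \<in> sections E"
  by (simp add: sections_def)

lemma sections_ord_at: "g \<in> sections E \<Longrightarrow> g \<noteq> 0 \<Longrightarrow> prime_divisor P \<Longrightarrow> ord_at P g + E P \<ge> 0"
  by (simp add: sections_def)

lemma sections_mult:
  assumes "g \<in> sections E1" "h \<in> sections E2" shows "g * h \<in> sections (\<lambda>P. E1 P + E2 P)"
proof (cases "g = 0 \<or> h = 0")
  case True then show ?thesis using sections_0 by auto
next
  case False
  have "ord_at P (g * h) + (E1 P + E2 P) \<ge> 0" if "prime_divisor P" for P
    using sections_ord_at[OF assms(1) _ that] sections_ord_at[OF assms(2) _ that] ord_at_mult[OF that] False
    by force
  then show ?thesis using False unfolding sections_def by simp
qed

lemma to_fract_in_sections: "to_fract a \<in> sections (\<lambda>_. 0)"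
  using ord_at_to_fract(1) by (cases "a = 0") (auto simp: sections_def)

lemma A_submodule_sections: "A_submodule (sections E)"
  unfolding A_submodule_def
proof (intro conjI ballI allI)
  show "0 \<in> sections E" by (rule sections_0)
next
  fix g h assume gh: "g \<in> sections E" "h \<in> sections E"
  show "g + h \<in> sections E"
  proof (cases "g = 0 \<or> h = 0 \<or> g + h = 0")
    case True then show ?thesis using gh sections_0 by auto
  next
    case False
    have "ord_at P (g + h) + E P \<ge> 0" if "prime_divisor P" for P
      using sections_ord_at[OF gh(1) _ that] sections_ord_at[OF gh(2) _ that] ord_at_add[OF that] False
      by force
    then show ?thesis using False unfolding sections_def by blast
  qed
next
  fix a g assume "g \<in> sections E"
  then show "to_fract a * g \<in> sections E"
    using sections_mult[OF to_fract_in_sections, of g E] by simp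
qed

lemma sections_mono:
  assumes "\<And>P. prime_divisor P \<Longrightarrow> E P \<le> E' P" shows "sections E \<subseteq> sections E'"
  using assms unfolding sections_def by force

lemma unit_multiple_in_sections:
  assumes Q: "prime_divisor Q" and h: "h \<noteq> 0" and E: "int_divisor E" and hQ: "ord_at Q h + E Q \<ge> 0"
  shows "\<exists>x. x \<notin> Q \<and> to_fract x * h \<in> sections E"
proof -
  define F where "F = {P. prime_divisor P \<and> (E P \<noteq> 0 \<or> ord_at P h \<noteq> 0)} - {Q}"
  have "F \<subseteq> {P. prime_divisor P \<and> E P \<noteq> 0} \<union> {P. prime_divisor P \<and> ord_at P h \<noteq> 0}"
    unfolding F_def by blast
  then have "finite F"
    using E finite_ord_at_support[OF h] unfolding int_divisor_def by (meson finite_UnI finite_subset)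
  moreover have "prime_divisor P \<and> \<not> P \<subseteq> Q" if "P \<in> F" for P
    using that prime_divisor_not_subset[OF _ Q] unfolding F_def by blast
  moreover have "prime_ideal Q" using Q by (simp add: prime_divisor_def)
  ultimately obtain x where x: "x \<notin> Q" "\<forall>P\<in>F. ord_at P (to_fract x) \<ge> int (nat (- E P - ord_at P h))"
    using approximation[of F Q "\<lambda>P. nat (- E P - ord_at P h)"] by blast
  have xnz: "x \<noteq> 0" using x(1) Q ring_ideal_0 unfolding prime_divisor_def prime_ideal_def by blast
  have "ord_at P (to_fract x * h) + E P \<ge> 0" if P: "prime_divisor P" for P
  proof -
    have e: "ord_at P (to_fract x * h) = ord_at P (to_fract x) + ord_at P h"
      using ord_at_mult[OF P] xnz h by simp
    have x0: "ord_at P (to_fract x) \<ge> 0" using ord_at_to_fract(1)[OF P] xnz by blast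
    consider "P = Q" | "P \<in> F" | "P \<noteq> Q" "P \<notin> F" by blast
    then show ?thesis
    proof cases
      case 1 then show ?thesis using e x0 hQ by simp
    next
      case 2
      then have "int (nat (- E P - ord_at P h)) \<le> ord_at P (to_fract x)" using x(2) by blast
      then show ?thesis using e by linarith
    next
      case 3 then show ?thesis using e x0 P unfolding F_def by auto
    qed
  qed
  then have "to_fract x * h \<in> sections E" unfolding sections_def using xnz h by simp
  then show ?thesis using x(1) by blast
qed

lemma section_with_exact_order:
  assumes Q: "prime_divisor Q" and E: "int_divisor E"
  shows "\<exists>u \<in> sections E. u \<noteq> 0 \<and> ord_at Q u = - E Q"
proof -
  interpret dedekind_prime T Q using Q by unfold_locales
  have unif_power: "ord_at Q (to_fract unif ^ k) = int k" for k
    using ord_power[of "to_fract unif" k] ord_unif unif_nonzero by simp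
  define u0 where
    "u0 = (if E Q \<le> 0 then to_fract unif ^ nat (- E Q) else inverse (to_fract unif ^ nat (E Q)))"
  have u0nz: "u0 \<noteq> 0" unfolding u0_def using unif_nonzero by simp
  have ou0: "ord_at Q u0 = - E Q"
  proof (cases "E Q \<le> 0")
    case True then show ?thesis unfolding u0_def using unif_power by simp
  next
    case False then show ?thesis
      unfolding u0_def using unif_power ord_inverse[of "to_fract unif ^ nat (E Q)"] unif_nonzero by simp
  qed
  then have "ord_at Q u0 + E Q \<ge> 0" by simp
  then obtain x where x: "x \<notin> Q" "to_fract x * u0 \<in> sections E"
    using unit_multiple_in_sections[OF Q u0nz E] by blast
  have xnz: "to_fract x \<noteq> 0" using x(1) notin_Q_nonzero by simp
  have "ord_at Q (to_fract x * u0) = ord_at Q (to_fract x) + ord_at Q u0"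
    by (rule ord_mult[OF xnz u0nz])
  also have "\<dots> = - E Q" using ord_to_fract(2) x(1) notin_Q_nonzero ou0 by simp
  finally show ?thesis using x(2) xnz u0nz by (intro bexI[of _ "to_fract x * u0"]) simp_all
qed

lemma no_prime_divisor_if_zero_maximal:
  assumes "maximal_ideal ({0}::'a set)" shows "\<not> prime_divisor (P::'a set)"
proof
  assume "prime_divisor P"
  then have P: "ring_ideal P" "P \<noteq> UNIV" "P \<noteq> {0}" by (auto simp: prime_divisor_def prime_ideal_def)
  have "{0} \<subseteq> P" using ring_ideal_0[OF P(1)] by blast
  then have "P = {0} \<or> P = UNIV" using assms P(1) unfolding maximal_ideal_def by blast
  then show False using P(2,3) by blast
qed

text \<open>The product formula \<open>H\<^sup>0(E\<^sub>1 + E\<^sub>2) = H\<^sup>0(E\<^sub>1) H\<^sup>0(E\<^sub>2)\<close>, checked locally: at a prime divisor \<open>Q\<close>,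
  divide by a section of \<open>E\<^sub>1\<close> of exact order \<open>-E\<^sub>1(Q)\<close>.\<close>

lemma sections_add_subset_span:
  assumes E1: "int_divisor E1" and E2: "int_divisor E2"
  shows "sections (\<lambda>P. E1 P + E2 P) \<subseteq> A_span {u * v | u v. u \<in> sections E1 \<and> v \<in> sections E2}"
proof
  fix g assume g: "g \<in> sections (\<lambda>P. E1 P + E2 P)"
  define S where "S = {u * v | u v. u \<in> sections E1 \<and> v \<in> sections E2}"
  show "g \<in> A_span S"
  proof (rule A_submodule_local_global[OF noetherian A_submodule_A_span])
    fix M :: "'a set" assume M: "maximal_ideal M"
    show "\<exists>x. x \<notin> M \<and> to_fract x * g \<in> A_span S"
    proof (cases "M = {0} \<or> g = 0")
      case True
      have "to_fract 1 * g \<in> A_span S"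
      proof (cases "g = 0")
        case True then show ?thesis using A_span.zero by simp
      next
        case False
        then have "M = {0}" using \<open>M = {0} \<or> g = 0\<close> by blast
        then have "\<not> prime_divisor (P::'a set)" for P using no_prime_divisor_if_zero_maximal M by blast
        then have "g \<in> sections E1" "1 \<in> sections E2" by (auto simp: sections_def)
        then have "g * 1 \<in> S" unfolding S_def by blast
        then show ?thesis using A_span.base by simp
      qed
      moreover have "1 \<notin> M" using M ring_ideal_one_imp_UNIV unfolding maximal_ideal_def by blast
      ultimately show ?thesis by blast
    next
      case False
      then have Q: "prime_divisor M" and gnz: "g \<noteq> 0" using maximal_ideal_cases[OF M] by auto
      obtain u where u: "u \<in> sections E1" "u \<noteq> 0" "ord_at M u = - E1 M"
        using section_with_exact_order[OF Q E1] by blast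
      have "ord_at M (g / u) + E2 M \<ge> 0"
        using sections_ord_at[OF g gnz Q] ord_at_divide[OF Q gnz u(2)] u(3) by simp
      moreover have "g / u \<noteq> 0" using gnz u(2) by simp
      ultimately obtain x where x: "x \<notin> M" "to_fract x * (g / u) \<in> sections E2"
        using unit_multiple_in_sections[OF Q _ E2] by blast
      have "to_fract x * g = u * (to_fract x * (g / u))" using u(2) by simp
      then have "to_fract x * g \<in> S" unfolding S_def using u(1) x(2) by blast
      then show ?thesis using x(1) A_span.base by blast
    qed
  qed
qed

lemma ideal_span_to_A_span:
  assumes "a \<in> ideal_span S" shows "to_fract a * w \<in> A_span ((\<lambda>s. to_fract s * w) ` S)"
proof -
  have "S \<subseteq> {a. to_fract a * w \<in> A_span ((\<lambda>s. to_fract s * w) ` S)}"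
    by (auto intro: A_span.base)
  then have "ideal_span S \<subseteq> {a. to_fract a * w \<in> A_span ((\<lambda>s. to_fract s * w) ` S)}"
    by (rule ideal_span_least[OF ring_ideal_denominators[OF A_submodule_A_span]])
  then show ?thesis using assms by blast
qed

text \<open>Multiplying by a suitable \<open>c \<noteq> 0\<close> embeds \<open>H\<^sup>0(E)\<close> into \<open>A\<close> as an ideal, which is finitely generated.\<close>

lemma sections_finitely_generated:
  assumes E: "int_divisor E" shows "\<exists>X. finite X \<and> X \<subseteq> sections E \<and> sections E \<subseteq> A_span X"
proof -
  define F where "F = {P. prime_divisor P \<and> E P \<noteq> 0}"
  have "finite F" using E unfolding int_divisor_def F_def .
  moreover have "prime_divisor P \<and> \<not> P \<subseteq> {0}" if "P \<in> F" for P
  proof -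
    have "prime_divisor P" "0 \<in> P"
      using that ring_ideal_0 unfolding F_def prime_divisor_def prime_ideal_def by auto
    then show ?thesis unfolding prime_divisor_def by (auto simp: subset_singleton_iff)
  qed
  ultimately obtain c where c: "c \<notin> {0}" "\<forall>P\<in>F. ord_at P (to_fract c) \<ge> int (nat (E P))"
    using approximation[of F "{0}" "\<lambda>P. nat (E P)"] prime_ideal_zero by blast
  have c_integral: "to_fract c * g \<in> range to_fract" if g: "g \<in> sections E" for g
  proof (cases "g = 0")
    case True then show ?thesis by (metis mult_zero_right rangeI to_fract_0)
  next
    case False
    have "ord_at P (to_fract c * g) \<ge> 0" if P: "prime_divisor P" for P
    proof -
      have "ord_at P (to_fract c * g) = ord_at P (to_fract c) + ord_at P g"
        using ord_at_mult[OF P] c(1) False by simp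
      moreover have "ord_at P g + E P \<ge> 0" using sections_ord_at[OF g False P] .
      moreover have "ord_at P (to_fract c) \<ge> 0" using ord_at_to_fract(1)[OF P] c(1) by simp
      moreover have "ord_at P (to_fract c) \<ge> E P" if "E P \<noteq> 0"
      proof -
        have "int (nat (E P)) \<le> ord_at P (to_fract c)" using c(2) P that unfolding F_def by blast
        then show ?thesis by linarith
      qed
      ultimately show ?thesis by (cases "E P = 0") linarith+
    qed
    then show ?thesis by (simp add: ord_at_nonneg_imp_integral)
  qed
  define I where "I = {a. to_fract a * inverse (to_fract c) \<in> sections E}"
  have "ring_ideal I" unfolding I_def by (rule ring_ideal_denominators[OF A_submodule_sections])
  then obtain S where S: "finite S" "I = ideal_span S" using noetherian unfolding noetherian_ring_def by blast
  define X where "X = (\<lambda>s. to_fract s * inverse (to_fract c)) ` S"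
  have "finite X" using S(1) X_def by simp
  moreover have "X \<subseteq> sections E"
  proof
    fix x assume "x \<in> X"
    then obtain s where "s \<in> S" "x = to_fract s * inverse (to_fract c)" unfolding X_def by blast
    moreover have "s \<in> I" using ideal_span_base[of s S] S(2) \<open>s \<in> S\<close> by simp
    ultimately show "x \<in> sections E" unfolding I_def by simp
  qed
  moreover have "sections E \<subseteq> A_span X"
  proof
    fix g assume g: "g \<in> sections E"
    obtain a where a: "to_fract c * g = to_fract a" using c_integral[OF g] by blast
    then have ga: "g = to_fract a * inverse (to_fract c)" using c(1) by (simp add: field_simps)
    then have "a \<in> I" using g unfolding I_def by simp
    then have "a \<in> ideal_span S" using S(2) by simp
    then show "g \<in> A_span X" unfolding ga X_def by (rule ideal_span_to_A_span)
  qed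
  ultimately show ?thesis by blast
qed

end

section \<open>The multigraded section ring\<close>

lemma rat_common_denominator:
  "finite V \<Longrightarrow> \<exists>N::nat. N > 0 \<and> (\<forall>x\<in>V. \<exists>z::int. of_nat N * (x::rat) = of_int z)"
proof (induction V rule: finite_induct)
  case empty then show ?case by (intro exI[of _ 1]) simp
next
  case (insert x V)
  then obtain N where N: "N > 0" "\<forall>y\<in>V. \<exists>z::int. of_nat N * y = of_int z" by blast
  obtain p q where pq: "quotient_of x = (p, q)" by (cases "quotient_of x") auto
  have q: "q > 0" using quotient_of_denom_pos[OF pq] .
  have xpq: "x = of_int p / of_int q" using quotient_of_div[OF pq] .
  define N' where "N' = N * nat q"
  have "N' > 0" using N(1) q N'_def by simp
  moreover have "\<exists>z::int. of_nat N' * y = of_int z" if y: "y \<in> insert x V" for y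
  proof (cases "y = x")
    case True
    have "of_nat N' * y = of_int (int N * p)" unfolding True N'_def xpq using q by simp
    then show ?thesis by blast
  next
    case False
    then obtain z where "of_nat N * y = of_int z" using N(2) y by auto
    then have "of_nat N' * y = of_int (q * z)" unfolding N'_def using q by (simp add: algebra_simps)
    then show ?thesis by blast
  qed
  ultimately show ?case by blast
qed

lemma poly_mapping_sum_single:
  "f = (\<Sum>m\<in>Poly_Mapping.keys f. Poly_Mapping.single m (Poly_Mapping.lookup f m))"
proof (rule poly_mapping_eqI)
  fix k
  have "Poly_Mapping.lookup (\<Sum>m\<in>Poly_Mapping.keys f. Poly_Mapping.single m (Poly_Mapping.lookup f m)) k
      = (\<Sum>m\<in>Poly_Mapping.keys f. (if m = k then Poly_Mapping.lookup f m else 0))"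
    by (simp add: lookup_sum lookup_single when_def)
  also have "\<dots> = Poly_Mapping.lookup f k" by (simp add: sum.delta' in_keys_iff)
  finally show "Poly_Mapping.lookup f k =
      Poly_Mapping.lookup (\<Sum>m\<in>Poly_Mapping.keys f. Poly_Mapping.single m (Poly_Mapping.lookup f m)) k"
    by simp
qed

definition exponent_box :: "nat \<Rightarrow> nat \<Rightarrow> (nat \<Rightarrow>\<^sub>0 nat) set" where
  "exponent_box r N = {\<rho>. Poly_Mapping.keys \<rho> \<subseteq> {..<r} \<and> (\<forall>i. Poly_Mapping.lookup \<rho> i \<le> N)}"

lemma finite_exponent_box: "finite (exponent_box r N)"
proof -
  have "Poly_Mapping.lookup ` exponent_box r N \<subseteq>
      {f. \<forall>x. (x \<in> {..<r} \<longrightarrow> f x \<in> {..N}) \<and> (x \<notin> {..<r} \<longrightarrow> f x = 0)}"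
    unfolding exponent_box_def by (auto simp: in_keys_iff)
  then have "finite (Poly_Mapping.lookup ` exponent_box r N)"
    by (rule finite_subset[OF _ finite_set_of_finite_funs]) simp_all
  moreover have "inj_on Poly_Mapping.lookup (exponent_box r N)"
    by (intro inj_onI poly_mapping_eqI) simp
  ultimately show ?thesis by (rule finite_imageD)
qed

lemma exponent_split:
  fixes m :: "nat \<Rightarrow>\<^sub>0 nat"
  assumes km: "Poly_Mapping.keys m \<subseteq> {..<r}" and i: "N < Poly_Mapping.lookup m i"
  obtains m' where "i < r" "m = Poly_Mapping.single i N + m'" "Poly_Mapping.keys m' \<subseteq> {..<r}"
    "(\<Sum>j<r. Poly_Mapping.lookup m' j) + N = (\<Sum>j<r. Poly_Mapping.lookup m j)"
proof
  have "i \<in> Poly_Mapping.keys m" using i by (simp add: in_keys_iff)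
  then show ir: "i < r" using km by blast
  define m' where "m' = m - Poly_Mapping.single i N"
  have lm': "Poly_Mapping.lookup m' j = Poly_Mapping.lookup m j - (if j = i then N else 0)" for j
    unfolding m'_def by (simp add: minus_poly_mapping.rep_eq lookup_single when_def)
  show split: "m = Poly_Mapping.single i N + m'"
    by (rule poly_mapping_eqI) (use i in \<open>simp add: lookup_add lm' lookup_single when_def\<close>)
  show "Poly_Mapping.keys m' \<subseteq> {..<r}"
  proof
    fix j assume "j \<in> Poly_Mapping.keys m'"
    then have "j \<in> Poly_Mapping.keys m" by (auto simp: in_keys_iff lm' split: if_splits)
    then show "j \<in> {..<r}" using km by blast
  qed
  have "(\<Sum>j<r. Poly_Mapping.lookup m j) = (\<Sum>j<r. Poly_Mapping.lookup (Poly_Mapping.single i N) j) + (\<Sum>j<r. Poly_Mapping.lookup m' j)"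
    by (subst split) (simp add: lookup_add sum.distrib)
  also have "(\<Sum>j<r. Poly_Mapping.lookup (Poly_Mapping.single i N) j) = N"
    using ir by (simp add: lookup_single when_def sum.delta)
  finally show "(\<Sum>j<r. Poly_Mapping.lookup m' j) + N = (\<Sum>j<r. Poly_Mapping.lookup m j)" by simp
qed

lemma A0_subalgebra_0: "0 \<in> A0_subalgebra G"
  using A0_subalgebra.scalar[of 0 G] by simp

lemma A0_subalgebra_sum: "(\<And>x. x \<in> A \<Longrightarrow> f x \<in> A0_subalgebra G) \<Longrightarrow> sum f A \<in> A0_subalgebra G"
  by (induction A rule: infinite_finite_induct) (auto simp: A0_subalgebra_0 A0_subalgebra.add)

lemma A_submodule_homogeneous_component:
  "A_submodule {g. Poly_Mapping.single m g \<in> A0_subalgebra G}"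
  unfolding A_submodule_def
proof (intro conjI ballI allI)
  show "0 \<in> {g. Poly_Mapping.single m g \<in> A0_subalgebra G}" using A0_subalgebra_0 by simp
next
  fix g h assume "g \<in> {g. Poly_Mapping.single m g \<in> A0_subalgebra G}" "h \<in> {g. Poly_Mapping.single m g \<in> A0_subalgebra G}"
  then show "g + h \<in> {g. Poly_Mapping.single m g \<in> A0_subalgebra G}"
    using A0_subalgebra.add by (fastforce simp: single_add)
next
  fix a g assume "g \<in> {g. Poly_Mapping.single m g \<in> A0_subalgebra G}"
  then have "Poly_Mapping.single 0 (to_fract a) * Poly_Mapping.single m g \<in> A0_subalgebra G"
    by (intro A0_subalgebra.mult A0_subalgebra.scalar) simp
  then show "to_fract a * g \<in> {g. Poly_Mapping.single m g \<in> A0_subalgebra G}"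
    by (simp add: mult_single)
qed

lemma single_A_span_in_A0_subalgebra:
  assumes "\<And>x. x \<in> X \<Longrightarrow> Poly_Mapping.single m x \<in> A0_subalgebra G" "g \<in> A_span X"
  shows "Poly_Mapping.single m g \<in> A0_subalgebra G"
  using A_span_least[OF A_submodule_homogeneous_component, of X m G] assms by blast

locale divisor_family = dedekind T for T :: "'a::idom itself" +
  fixes r :: nat and D :: "nat \<Rightarrow> 'a set \<Rightarrow> rat"
  assumes Q_divisors: "\<forall>i<r. Q_divisor (D i)"
begin

definition comb :: "(nat \<Rightarrow>\<^sub>0 nat) \<Rightarrow> 'a set \<Rightarrow> rat" where
  "comb m P = (\<Sum>i<r. of_nat (Poly_Mapping.lookup m i) * D i P)"

definition floor_comb :: "(nat \<Rightarrow>\<^sub>0 nat) \<Rightarrow> 'a set \<Rightarrow> int" where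
  "floor_comb m P = \<lfloor>comb m P\<rfloor>"

lemma int_divisor_floor_comb: "int_divisor (floor_comb m)"
proof -
  have "{P. prime_divisor P \<and> floor_comb m P \<noteq> 0} \<subseteq> (\<Union>i<r. {P. D i P \<noteq> 0})"
  proof
    fix P assume P: "P \<in> {P. prime_divisor P \<and> floor_comb m P \<noteq> 0}"
    show "P \<in> (\<Union>i<r. {P. D i P \<noteq> 0})"
    proof (rule ccontr)
      assume "P \<notin> (\<Union>i<r. {P. D i P \<noteq> 0})"
      then have "comb m P = 0" unfolding comb_def by simp
      then show False using P unfolding floor_comb_def by simp
    qed
  qed
  moreover have "finite (\<Union>i<r. {P. D i P \<noteq> 0})"
    using Q_divisors unfolding Q_divisor_def by blast
  ultimately show ?thesis unfolding int_divisor_def using finite_subset by blast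
qed

lemma comb_add: "comb (m1 + m2) P = comb m1 P + comb m2 P"
  unfolding comb_def by (simp add: lookup_add distrib_right sum.distrib)

lemma floor_comb_add_ge: "floor_comb m1 P + floor_comb m2 P \<le> floor_comb (m1 + m2) P"
  unfolding floor_comb_def comb_add by (rule le_floor_add)

lemma comb_single:
  assumes "i < r" shows "comb (Poly_Mapping.single i N) P = of_nat N * D i P"
proof -
  have "comb (Poly_Mapping.single i N) P = (\<Sum>j<r. if i = j then of_nat N * D i P else 0)"
    unfolding comb_def by (rule sum.cong) (simp_all add: lookup_single)
  then show ?thesis using assms by (simp add: sum.delta)
qed

lemma floor_comb_split:
  assumes i: "i < r" and z: "of_nat N * D i P = of_int z"
  shows "floor_comb (Poly_Mapping.single i N + m') P = floor_comb (Poly_Mapping.single i N) P + floor_comb m' P"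
proof -
  have "comb (Poly_Mapping.single i N + m') P = comb m' P + of_int z"
    using comb_add comb_single[OF i] z by simp
  then show ?thesis unfolding floor_comb_def using comb_single[OF i] z by simp
qed

lemma section_ring_iff: "f \<in> section_ring r D \<longleftrightarrow>
    (\<forall>m. Poly_Mapping.lookup f m \<noteq> 0 \<longrightarrow>
       Poly_Mapping.keys m \<subseteq> {..<r} \<and> Poly_Mapping.lookup f m \<in> sections (floor_comb m))"
proof -
  have "H0 (\<lambda>P. \<Sum>i<r. of_nat (Poly_Mapping.lookup m i) * D i P) = sections (floor_comb m)" for m
    unfolding H0_eq_sections floor_comb_def comb_def ..
  then show ?thesis unfolding section_ring_def by simp
qed

lemma section_ring_0: "0 \<in> section_ring r D"
  unfolding section_ring_iff by simp

lemma section_ring_single: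
  "(c \<noteq> 0 \<Longrightarrow> Poly_Mapping.keys m \<subseteq> {..<r} \<and> c \<in> sections (floor_comb m)) \<Longrightarrow>
    Poly_Mapping.single m c \<in> section_ring r D"
  unfolding section_ring_iff by (auto simp: lookup_single when_def)

lemma section_ring_add:
  assumes f: "f \<in> section_ring r D" and g: "g \<in> section_ring r D" shows "f + g \<in> section_ring r D"
  unfolding section_ring_iff
proof (intro allI impI)
  fix m assume "Poly_Mapping.lookup (f + g) m \<noteq> 0"
  then have "Poly_Mapping.lookup f m \<noteq> 0 \<or> Poly_Mapping.lookup g m \<noteq> 0" by (auto simp: lookup_add)
  then have "Poly_Mapping.keys m \<subseteq> {..<r}" using f g unfolding section_ring_iff by blast
  moreover have "Poly_Mapping.lookup f m \<in> sections (floor_comb m)" "Poly_Mapping.lookup g m \<in> sections (floor_comb m)"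
    using f g sections_0 unfolding section_ring_iff by metis+
  then have "Poly_Mapping.lookup (f + g) m \<in> sections (floor_comb m)"
    using A_submodule_sections unfolding A_submodule_def by (simp add: lookup_add)
  ultimately show "Poly_Mapping.keys m \<subseteq> {..<r} \<and> Poly_Mapping.lookup (f + g) m \<in> sections (floor_comb m)"
    by blast
qed

lemma section_ring_sum: "(\<And>x. x \<in> A \<Longrightarrow> f x \<in> section_ring r D) \<Longrightarrow> sum f A \<in> section_ring r D"
  by (induction A rule: infinite_finite_induct) (simp_all add: section_ring_0 section_ring_add)

lemma section_ring_mult:
  assumes f: "f \<in> section_ring r D" and g: "g \<in> section_ring r D" shows "f * g \<in> section_ring r D"
proof -
  have "f * g = (\<Sum>m2\<in>Poly_Mapping.keys g. \<Sum>m1\<in>Poly_Mapping.keys f.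
      Poly_Mapping.single (m1 + m2) (Poly_Mapping.lookup f m1 * Poly_Mapping.lookup g m2))"
    by (subst poly_mapping_sum_single[of f], subst poly_mapping_sum_single[of g])
      (simp add: sum_distrib_left sum_distrib_right mult_single)
  also have "\<dots> \<in> section_ring r D"
  proof (intro section_ring_sum section_ring_single)
    fix m1 m2 assume "m2 \<in> Poly_Mapping.keys g" "m1 \<in> Poly_Mapping.keys f"
    then have "Poly_Mapping.keys m1 \<subseteq> {..<r}" "Poly_Mapping.lookup f m1 \<in> sections (floor_comb m1)"
      "Poly_Mapping.keys m2 \<subseteq> {..<r}" "Poly_Mapping.lookup g m2 \<in> sections (floor_comb m2)"
      using f g unfolding section_ring_iff by (simp_all add: in_keys_iff)
    moreover have "sections (\<lambda>P. floor_comb m1 P + floor_comb m2 P) \<subseteq> sections (floor_comb (m1 + m2))"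
      by (rule sections_mono) (rule floor_comb_add_ge)
    moreover have "Poly_Mapping.lookup f m1 * Poly_Mapping.lookup g m2 \<in> sections (\<lambda>P. floor_comb m1 P + floor_comb m2 P)"
      using calculation(2,4) by (rule sections_mult)
    ultimately show "Poly_Mapping.keys (m1 + m2) \<subseteq> {..<r} \<and>
        Poly_Mapping.lookup f m1 * Poly_Mapping.lookup g m2 \<in> sections (floor_comb (m1 + m2))"
      using keys_add[of m1 m2] by blast
  qed
  finally show ?thesis .
qed

lemma A0_subalgebra_subset_section_ring:
  assumes "G \<subseteq> section_ring r D" shows "A0_subalgebra G \<subseteq> section_ring r D"
proof
  fix f assume "f \<in> A0_subalgebra G"
  then show "f \<in> section_ring r D"
  proof (induction rule: A0_subalgebra.induct)
    case (gen x) then show ?case using assms by blast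
  next
    case (scalar a)
    have "floor_comb 0 = (\<lambda>_. 0)" by (simp add: fun_eq_iff floor_comb_def comb_def)
    then have "to_fract a \<in> sections (floor_comb 0)" using to_fract_in_sections by simp
    then show ?case by (intro section_ring_single) simp
  next
    case (add x y) then show ?case using section_ring_add by blast
  next
    case (mult x y) then show ?case using section_ring_mult by blast
  qed
qed

lemma section_ring_subset_A0_subalgebra:
  assumes "\<And>m g. Poly_Mapping.keys m \<subseteq> {..<r} \<Longrightarrow> g \<in> sections (floor_comb m) \<Longrightarrow>
      Poly_Mapping.single m g \<in> A0_subalgebra G"
  shows "section_ring r D \<subseteq> A0_subalgebra G"
proof
  fix f assume f: "f \<in> section_ring r D"
  have "(\<Sum>m\<in>Poly_Mapping.keys f. Poly_Mapping.single m (Poly_Mapping.lookup f m)) \<in> A0_subalgebra G"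
    using f by (intro A0_subalgebra_sum assms) (simp_all add: section_ring_iff in_keys_iff)
  then show "f \<in> A0_subalgebra G" using poly_mapping_sum_single[of f] by simp
qed

text \<open>Once \<open>N D\<^sub>i\<close> is integral, peeling off \<open>N e\<^sub>i\<close> from an exponent leaves the floor additive, so
  by the product formula every homogeneous section is generated by those of exponents in the box
  \<open>[0, N]\<^sup>r\<close>.\<close>

lemma homogeneous_in_A0_subalgebra:
  assumes N: "N > 0" and N_int: "\<And>i P. i < r \<Longrightarrow> \<exists>z. of_nat N * D i P = of_int z"
    and box: "\<And>\<rho> g. \<rho> \<in> exponent_box r N \<Longrightarrow> g \<in> sections (floor_comb \<rho>) \<Longrightarrow>
      Poly_Mapping.single \<rho> g \<in> A0_subalgebra G"
  shows "Poly_Mapping.keys m \<subseteq> {..<r} \<Longrightarrow> g \<in> sections (floor_comb m) \<Longrightarrow>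
      Poly_Mapping.single m g \<in> A0_subalgebra G"
proof (induction "\<Sum>i<r. Poly_Mapping.lookup m i" arbitrary: m g rule: less_induct)
  case less
  show ?case
  proof (cases "\<forall>i. Poly_Mapping.lookup m i \<le> N")
    case True
    then show ?thesis using box less.prems unfolding exponent_box_def by blast
  next
    case False
    then obtain i where "N < Poly_Mapping.lookup m i" by (auto simp: not_le)
    with less.prems(1) obtain m' where m': "i < r" "m = Poly_Mapping.single i N + m'"
      "Poly_Mapping.keys m' \<subseteq> {..<r}" "(\<Sum>j<r. Poly_Mapping.lookup m' j) + N = (\<Sum>j<r. Poly_Mapping.lookup m j)"
      by (rule exponent_split)
    define s where "s = Poly_Mapping.single i N"
    have "s \<in> exponent_box r N" using m'(1) unfolding s_def exponent_box_def by (auto simp: lookup_single when_def)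
    have "floor_comb m = (\<lambda>P. floor_comb s P + floor_comb m' P)"
    proof
      fix P
      obtain z where "of_nat N * D i P = of_int z" using N_int[OF m'(1)] by blast
      then show "floor_comb m P = floor_comb s P + floor_comb m' P"
        unfolding m'(2) s_def by (rule floor_comb_split[OF m'(1)])
    qed
    then have "g \<in> sections (\<lambda>P. floor_comb s P + floor_comb m' P)" using less.prems(2) by simp
    then have "g \<in> A_span {u * v | u v. u \<in> sections (floor_comb s) \<and> v \<in> sections (floor_comb m')}"
      using sections_add_subset_span[OF int_divisor_floor_comb int_divisor_floor_comb] by blast
    moreover have "Poly_Mapping.single m x \<in> A0_subalgebra G"
      if x: "x \<in> {u * v | u v. u \<in> sections (floor_comb s) \<and> v \<in> sections (floor_comb m')}" for x
    proof -
      obtain u v where uv: "x = u * v" "u \<in> sections (floor_comb s)" "v \<in> sections (floor_comb m')"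
        using x by blast
      have "(\<Sum>j<r. Poly_Mapping.lookup m' j) < (\<Sum>j<r. Poly_Mapping.lookup m j)"
        using m'(4) N by linarith
      then have "Poly_Mapping.single m' v \<in> A0_subalgebra G"
        using less.hyps m'(3) uv(3) by blast
      then have "Poly_Mapping.single s u * Poly_Mapping.single m' v \<in> A0_subalgebra G"
        using box[OF \<open>s \<in> exponent_box r N\<close> uv(2)] by (rule A0_subalgebra.mult[rotated])
      then show ?thesis using m'(2) uv(1) unfolding s_def by (simp add: mult_single)
    qed
    ultimately show ?thesis by (rule single_A_span_in_A0_subalgebra[rotated])
  qed
qed

theorem section_ring_finitely_generated: "finitely_generated_A0_algebra (section_ring r D)"
proof -
  define V where "V = (\<Union>i<r. D i ` {P. D i P \<noteq> 0})"
  have "finite V" unfolding V_def using Q_divisors unfolding Q_divisor_def by auto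
  then obtain N where N: "N > 0" "\<forall>x\<in>V. \<exists>z::int. of_nat N * x = of_int z"
    using rat_common_denominator by blast
  have N_int: "\<exists>z::int. of_nat N * D i P = of_int z" if "i < r" for i P
  proof (cases "D i P = 0")
    case True then show ?thesis by (intro exI[of _ 0]) simp
  next
    case False
    then have "D i P \<in> V" unfolding V_def using that by blast
    then show ?thesis using N(2) by blast
  qed
  have "\<forall>\<rho>. \<exists>X. finite X \<and> X \<subseteq> sections (floor_comb \<rho>) \<and> sections (floor_comb \<rho>) \<subseteq> A_span X"
    using sections_finitely_generated[OF int_divisor_floor_comb] by blast
  then obtain X where X: "\<And>\<rho>. finite (X \<rho>)" "\<And>\<rho>. X \<rho> \<subseteq> sections (floor_comb \<rho>)"
    "\<And>\<rho>. sections (floor_comb \<rho>) \<subseteq> A_span (X \<rho>)"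
    by metis
  define G where "G = (\<Union>\<rho>\<in>exponent_box r N. Poly_Mapping.single \<rho> ` X \<rho>)"
  have "finite G" unfolding G_def using finite_exponent_box X(1) by blast
  have G: "G \<subseteq> section_ring r D"
  proof
    fix f assume "f \<in> G"
    then obtain \<rho> x where \<rho>: "\<rho> \<in> exponent_box r N" "x \<in> X \<rho>" "f = Poly_Mapping.single \<rho> x"
      unfolding G_def by blast
    then have "Poly_Mapping.keys \<rho> \<subseteq> {..<r}" "x \<in> sections (floor_comb \<rho>)"
      using X(2) unfolding exponent_box_def by blast+
    then show "f \<in> section_ring r D" unfolding \<rho>(3) by (simp add: section_ring_single)
  qed
  have box: "Poly_Mapping.single \<rho> g \<in> A0_subalgebra G"
    if \<rho>: "\<rho> \<in> exponent_box r N" and g: "g \<in> sections (floor_comb \<rho>)" for \<rho> g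
  proof (rule single_A_span_in_A0_subalgebra)
    show "g \<in> A_span (X \<rho>)" using g X(3) by blast
    show "Poly_Mapping.single \<rho> x \<in> A0_subalgebra G" if x: "x \<in> X \<rho>" for x
      using x \<rho> unfolding G_def by (blast intro: A0_subalgebra.gen)
  qed
  have "section_ring r D \<subseteq> A0_subalgebra G"
    by (rule section_ring_subset_A0_subalgebra, rule homogeneous_in_A0_subalgebra[OF N(1) N_int box])
  then have "A0_subalgebra G = section_ring r D"
    using A0_subalgebra_subset_section_ring[OF G] by (rule equalityI[rotated])
  then show ?thesis
    unfolding finitely_generated_A0_algebra_def using \<open>finite G\<close> G by (intro exI[of _ G] conjI)
qed

end

theorem lemma2p8:
  fixes r :: nat and D :: "nat \<Rightarrow> 'a::idom set \<Rightarrow> rat"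
  assumes "dedekind_domain TYPE('a)"
    and "\<forall>i<r. Q_divisor (D i)"
  shows "finitely_generated_A0_algebra (section_ring r D)"
proof -
  interpret divisor_family "TYPE('a)" r D using assms by unfold_locales
  show ?thesis by (rule section_ring_finitely_generated)
qed

end
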